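(* Let $\omega$ be a weight on a countable group $G$, and let $\mu$ be a probability measure on $G$ with $\mu\in\bigcup_{p\ge1}\ell^1(G,\omega_p)$. Then $\mu$ has a finite Lyapunov exponent with respect to $\omega$, and \[ \mathrm{Ly}_\omega(G,\mu)=\lim_{p\to\infty}p\log r_{\ell^1(G,\omega_p)}(\mu), \] where $r_{\ell^1(G,\omega_p)}(\mu)$ is the spectral radius of $\mu$ in the Banach algebra $\ell^1(G,\omega_p)$.
   Context: A weight on $G$ is $\omega:G\to[a,\infty)$, $a>0$, with $\omega(st)\le C\omega(s)\omega(t)$ for some $C>0$ and all $s,t\in G$. For $p\ge1$, $\omega_p(s)=\omega(s)^{1/p}$ (again a weight). For a weight $\omega$, $\ell^1(G,\omega)=\{f:\sum_s|f(s)|\omega(s)<\infty\}$ with norm $\|f\|_{1,\omega}=\sum_s|f(s)|\omega(s)$, a Banach algebra under convolution $f*g(s)=\sum_tf(t)g(t^{-1}s)$ (after rescaling $\omega$ to be submultiplicative; the spectral radius is unaffected). The Lyapunov exponent is $\mathrm{Ly}_\omega(G,\mu)=\lim_{n\to\infty}\frac1n\sum_s\mu^{*n}(s)\log\omega(s)$. *)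

theory Defs
  imports "HOL-Analysis.Analysis" "HOL-Algebra.Group"
begin

definition conv :: "('a, 'm) monoid_scheme \<Rightarrow> ('a \<Rightarrow> 'b::real_normed_field) \<Rightarrow> ('a \<Rightarrow> 'b) \<Rightarrow> 'a \<Rightarrow> 'b" where
  "conv G f g s = (\<Sum>\<^sub>\<infinity>t\<in>carrier G. f t * g (inv\<^bsub>G\<^esub> t \<otimes>\<^bsub>G\<^esub> s))"

definition delta :: "('a, 'm) monoid_scheme \<Rightarrow> 'a \<Rightarrow> 'b::real_normed_field" where
  "delta G s = (if s = \<one>\<^bsub>G\<^esub> then 1 else 0)"

fun conv_pow :: "('a, 'm) monoid_scheme \<Rightarrow> ('a \<Rightarrow> 'b::real_normed_field) \<Rightarrow> nat \<Rightarrow> 'a \<Rightarrow> 'b" where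
  "conv_pow G f 0 = delta G"
| "conv_pow G f (Suc n) = conv G f (conv_pow G f n)"

definition is_weight :: "('a, 'm) monoid_scheme \<Rightarrow> ('a \<Rightarrow> real) \<Rightarrow> bool" where
  "is_weight G w \<longleftrightarrow> (\<exists>a>0. \<forall>s\<in>carrier G. a \<le> w s) \<and>
     (\<exists>C>0. \<forall>s\<in>carrier G. \<forall>t\<in>carrier G. w (s \<otimes>\<^bsub>G\<^esub> t) \<le> C * w s * w t)"

definition l1 :: "('a, 'm) monoid_scheme \<Rightarrow> ('a \<Rightarrow> real) \<Rightarrow> ('a \<Rightarrow> complex) set" where
  "l1 G w = {f. (\<lambda>s. norm (f s) * w s) summable_on carrier G}"

definition l1_invertible :: "('a, 'm) monoid_scheme \<Rightarrow> ('a \<Rightarrow> real) \<Rightarrow> ('a \<Rightarrow> complex) \<Rightarrow> bool" where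
  "l1_invertible G w f \<longleftrightarrow> (\<exists>g\<in>l1 G w. \<forall>s\<in>carrier G.
      conv G f g s = delta G s \<and> conv G g f s = delta G s)"

definition l1_spectrum :: "('a, 'm) monoid_scheme \<Rightarrow> ('a \<Rightarrow> real) \<Rightarrow> ('a \<Rightarrow> complex) \<Rightarrow> complex set" where
  "l1_spectrum G w f = {z. \<not> l1_invertible G w (\<lambda>s. z * delta G s - f s)}"

definition l1_spectral_radius :: "('a, 'm) monoid_scheme \<Rightarrow> ('a \<Rightarrow> real) \<Rightarrow> ('a \<Rightarrow> complex) \<Rightarrow> real" where
  "l1_spectral_radius G w f = Sup (norm ` l1_spectrum G w f)"

end

theory Submission
  imports Defs
begin

text \<open>
  Let \<open>P n = \<mu>\<^sup>*\<^sup>n\<close>, \<open>L n = \<Sum>\<^sub>s P n s ln \<omega>(s)\<close> and \<open>A p n = \<Sum>\<^sub>s P n s \<omega>(s)\<^sup>1\<^sup>/\<^sup>p\<close>, the norm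
  of \<open>P n\<close> in \<open>\<ell>\<^sup>1(G, \<omega>\<^sub>p)\<close>. For a positive element the spectral radius is the Gelfand
  limit \<open>r\<^sub>p = inf\<^sub>n (C\<^sup>1\<^sup>/\<^sup>p A p n)\<^sup>1\<^sup>/\<^sup>n\<close>: the Neumann series inverts \<open>z \<delta> - \<mu>\<close> for
  \<open>\<bar>z\<bar> > r\<^sub>p\<close>, while at real \<open>t \<down> r\<^sub>p\<close> positivity forbids cancellation in the series, so the
  resolvent norm grows like \<open>1 / (t - r\<^sub>p)\<close> and \<open>r\<^sub>p\<close> lies in the spectrum.

  Jensen's inequality gives \<open>L n \<le> p ln A p n\<close>, and the second-order Taylor bound for
  \<open>\<omega>\<^sup>1\<^sup>/\<^sup>p = exp (ln \<omega> / p)\<close> gives \<open>p ln A p n \<le> L n + D n / p\<close> with \<open>D n\<close> independent of \<open>p\<close>.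
  As \<open>L n + ln C\<close> is subadditive, Fekete's lemma shows that \<open>Ly = inf\<^sub>n (L n + ln C) / n\<close> is
  \<open>lim L n / n\<close>, and \<open>p ln r\<^sub>p\<close> is squeezed between \<open>Ly\<close> and \<open>(L n + ln C) / n + D n / p\<close>.
\<close>

section \<open>Unconditional sums\<close>

lemma has_sum_single_nonzero:
  fixes f :: "'x \<Rightarrow> 'c::{comm_monoid_add,t2_space}"
  assumes "x \<in> A" "\<And>y. y \<in> A \<Longrightarrow> y \<noteq> x \<Longrightarrow> f y = 0"
  shows "(f has_sum f x) A"
proof -
  have "(f has_sum f x) {x}" by (simp add: has_sum_finite[of "{x}", simplified])
  moreover have "(f has_sum f x) A \<longleftrightarrow> (f has_sum f x) {x}"
    by (rule has_sum_cong_neutral) (use assms in auto)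
  ultimately show ?thesis by simp
qed

lemma abs_summable_on_Times_dominated:
  fixes P :: "'x \<times> 'y \<Rightarrow> 'c::banach"
  assumes rows: "\<And>x. x \<in> A \<Longrightarrow> ((\<lambda>y. \<gamma> (x,y)) has_sum r x) B" and "r summable_on A"
    and "\<And>x y. x \<in> A \<Longrightarrow> y \<in> B \<Longrightarrow> 0 \<le> \<gamma> (x,y)"
    and "\<And>x y. x \<in> A \<Longrightarrow> y \<in> B \<Longrightarrow> norm (P (x,y)) \<le> \<gamma> (x,y)"
  shows "(\<lambda>p. norm (P p)) summable_on A \<times> B"
proof -
  have "\<gamma> summable_on Sigma A (\<lambda>_. B)"
    by (rule summable_on_SigmaI[OF rows]) (use assms(2,3) in auto)
  then show ?thesis
    by (rule summable_on_comparison_test) (use assms(3,4) in auto)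
qed

lemma abs_summable_on_Times_product_bound:
  fixes P :: "'x \<times> 'y \<Rightarrow> 'c::banach"
  assumes "\<alpha> summable_on A" "\<beta> summable_on B"
    and "\<And>x. x \<in> A \<Longrightarrow> 0 \<le> \<alpha> x" "\<And>y. y \<in> B \<Longrightarrow> 0 \<le> \<beta> y"
    and "\<And>x y. x \<in> A \<Longrightarrow> y \<in> B \<Longrightarrow> norm (P (x,y)) \<le> \<alpha> x * \<beta> y"
  shows "(\<lambda>p. norm (P p)) summable_on A \<times> B"
proof (rule abs_summable_on_Times_dominated[where \<gamma> = "\<lambda>(x,y). \<alpha> x * \<beta> y"])
  show "((\<lambda>y. case (x, y) of (x, y) \<Rightarrow> \<alpha> x * \<beta> y) has_sum \<alpha> x * infsum \<beta> B) B" for x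
    using assms(2) by (simp add: has_sum_cmult_right)
  show "(\<lambda>x. \<alpha> x * infsum \<beta> B) summable_on A"
    using assms(1) by (rule summable_on_cmult_left)
  show "0 \<le> (case (x, y) of (x, y) \<Rightarrow> \<alpha> x * \<beta> y)" if "x \<in> A" "y \<in> B" for x y
    using assms(3,4) that by simp
  show "norm (P (x, y)) \<le> (case (x, y) of (x, y) \<Rightarrow> \<alpha> x * \<beta> y)" if "x \<in> A" "y \<in> B" for x y
    using assms(5) that by simp
qed

lemma summable_lincomb:
  fixes f g :: "'x \<Rightarrow> real"
  assumes "f summable_on A" "g summable_on A"
  shows "(\<lambda>s. c * f s + d * g s) summable_on A"
  using assms by (intro summable_on_add summable_on_cmult_right)

lemma infsum_lincomb:
  fixes f g :: "'x \<Rightarrow> real"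
  assumes "f summable_on A" "g summable_on A"
  shows "(\<Sum>\<^sub>\<infinity>s\<in>A. c * f s + d * g s) = c * infsum f A + d * infsum g A"
  using assms by (simp add: infsum_add summable_on_cmult_right infsum_cmult_right')

lemma summable_on_divide_const:
  fixes f :: "'x \<Rightarrow> 'c::{topological_semigroup_mult,field}"
  shows "f summable_on A \<Longrightarrow> (\<lambda>x. f x / c) summable_on A"
  unfolding summable_on_def using has_sum_divide_const by blast

lemma infsum_of_real: "(\<Sum>\<^sub>\<infinity>x\<in>A. complex_of_real (f x)) = complex_of_real (infsum f A)"
proof (cases "f summable_on A")
  case True
  then show ?thesis by (intro infsumI has_sum_of_real) simp
next
  case False
  have "\<not> (\<lambda>x. complex_of_real (f x)) summable_on A"
  proof
    assume "(\<lambda>x. complex_of_real (f x)) summable_on A"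
    from summable_on_Re[OF this] False show False by simp
  qed
  with False show ?thesis by (simp add: infsum_not_exists)
qed

lemma infsum_split_head:
  fixes g :: "nat \<Rightarrow> 'c::banach"
  assumes "g summable_on UNIV"
  shows "infsum g UNIV = g 0 + (\<Sum>\<^sub>\<infinity>n. g (Suc n))"
proof -
  have U: "UNIV = insert 0 (range Suc)" by (auto intro: nat.exhaust)
  have "g summable_on range Suc" using assms by (rule summable_on_subset_banach) simp
  then have "infsum g (insert 0 (range Suc)) = g 0 + infsum g (range Suc)"
    by (intro infsum_insert) auto
  also have "infsum g (range Suc) = (\<Sum>\<^sub>\<infinity>n. g (Suc n))"
    by (subst infsum_reindex) (auto simp: o_def)
  finally show ?thesis using U by simp
qed

lemma infsum_sum_lessThan:
  fixes F :: "nat \<Rightarrow> 'x \<Rightarrow> real"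
  assumes "\<And>n. F n summable_on A"
  shows "(\<lambda>s. \<Sum>n<M. F n s) summable_on A"
    and "(\<Sum>\<^sub>\<infinity>s\<in>A. \<Sum>n<M. F n s) = (\<Sum>n<M. infsum (F n) A)"
proof -
  have "(\<lambda>s. \<Sum>n<M. F n s) summable_on A \<and> (\<Sum>\<^sub>\<infinity>s\<in>A. \<Sum>n<M. F n s) = (\<Sum>n<M. infsum (F n) A)"
    by (induction M) (simp_all add: assms summable_on_add infsum_add)
  then show "(\<lambda>s. \<Sum>n<M. F n s) summable_on A" "(\<Sum>\<^sub>\<infinity>s\<in>A. \<Sum>n<M. F n s) = (\<Sum>n<M. infsum (F n) A)"
    by auto
qed

section \<open>Convolution on a group\<close>

context group
begin

lemma bij_betw_mult_left: "t \<in> carrier G \<Longrightarrow> bij_betw (\<lambda>u. t \<otimes> u) (carrier G) (carrier G)"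
  by (rule bij_betw_byWitness[where f' = "\<lambda>s. inv t \<otimes> s"]) (auto simp: m_assoc[symmetric])

lemma infsum_mult_left_reindex:
  fixes h :: "'a \<Rightarrow> 'c::{comm_monoid_add,t2_space}"
  shows "t \<in> carrier G \<Longrightarrow> (\<Sum>\<^sub>\<infinity>s\<in>carrier G. h (t \<otimes> s)) = (\<Sum>\<^sub>\<infinity>s\<in>carrier G. h s)"
  by (rule infsum_reindex_bij_betw[OF bij_betw_mult_left])

lemma abs_summable_conv_term_bounded:
  fixes f g :: "'a \<Rightarrow> 'c::real_normed_field"
  assumes "(\<lambda>t. norm (f t)) summable_on carrier G" "\<And>x. x \<in> carrier G \<Longrightarrow> norm (g x) \<le> M"
    and "s \<in> carrier G"
  shows "(\<lambda>t. norm (f t * g (inv t \<otimes> s))) summable_on carrier G"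
proof (rule summable_on_comparison_test)
  show "(\<lambda>t. norm (f t) * M) summable_on carrier G"
    using assms(1) by (rule summable_on_cmult_left)
  fix t assume "t \<in> carrier G"
  then have "norm (g (inv t \<otimes> s)) \<le> M" using assms(2,3) by simp
  then show "norm (f t * g (inv t \<otimes> s)) \<le> norm (f t) * M"
    unfolding norm_mult by (rule mult_left_mono) simp
qed simp

lemma conv_cong:
  fixes f f' g g' :: "'a \<Rightarrow> 'c::real_normed_field"
  shows "s \<in> carrier G \<Longrightarrow> (\<And>x. x \<in> carrier G \<Longrightarrow> f x = f' x) \<Longrightarrow> (\<And>x. x \<in> carrier G \<Longrightarrow> g x = g' x)
    \<Longrightarrow> conv G f g s = conv G f' g' s"
  unfolding conv_def by (intro infsum_cong) simp

lemma conv_scale_left: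
  fixes f g :: "'a \<Rightarrow> 'c::real_normed_field"
  shows "conv G (\<lambda>x. a * f x) g s = a * conv G f g s"
  unfolding conv_def by (simp add: infsum_cmult_right'[symmetric] mult.assoc)

lemma conv_scale_right:
  fixes f g :: "'a \<Rightarrow> 'c::real_normed_field"
  shows "conv G f (\<lambda>x. a * g x) s = a * conv G f g s"
  unfolding conv_def by (simp add: infsum_cmult_right'[symmetric] algebra_simps)

lemma conv_delta_left:
  fixes f :: "'a \<Rightarrow> 'c::real_normed_field"
  shows "s \<in> carrier G \<Longrightarrow> conv G (delta G) f s = f s"
proof -
  assume s: "s \<in> carrier G"
  have "((\<lambda>t. delta G t * f (inv t \<otimes> s)) has_sum (delta G \<one> * f (inv \<one> \<otimes> s))) (carrier G)"
    by (rule has_sum_single_nonzero) (auto simp: delta_def)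
  then show ?thesis unfolding conv_def using s by (simp add: infsumI delta_def)
qed

lemma conv_delta_right:
  fixes f :: "'a \<Rightarrow> 'c::real_normed_field"
  shows "s \<in> carrier G \<Longrightarrow> conv G f (delta G) s = f s"
proof -
  assume s: "s \<in> carrier G"
  have "((\<lambda>t. f t * delta G (inv t \<otimes> s)) has_sum (f s * delta G (inv s \<otimes> s))) (carrier G)"
  proof (rule has_sum_single_nonzero[OF s])
    fix y assume "y \<in> carrier G" "y \<noteq> s"
    have "inv y \<otimes> s \<noteq> \<one>"
    proof
      assume "inv y \<otimes> s = \<one>"
      then have "y \<otimes> (inv y \<otimes> s) = y" using \<open>y \<in> carrier G\<close> by simp
      then show False using \<open>y \<in> carrier G\<close> \<open>y \<noteq> s\<close> s by (simp add: m_assoc[symmetric])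
    qed
    then show "f y * delta G (inv y \<otimes> s) = 0" by (simp add: delta_def)
  qed
  then show ?thesis unfolding conv_def using s by (simp add: infsumI delta_def)
qed

lemma infsum_conv_mult:
  fixes f g h :: "'a \<Rightarrow> 'c::{real_normed_field,banach}"
  assumes abs: "(\<lambda>(t,u). norm (f t * g u * h (t \<otimes> u))) summable_on carrier G \<times> carrier G"
  shows "(\<lambda>s. conv G f g s * h s) summable_on carrier G"
    and "(\<Sum>\<^sub>\<infinity>s\<in>carrier G. conv G f g s * h s)
          = (\<Sum>\<^sub>\<infinity>t\<in>carrier G. \<Sum>\<^sub>\<infinity>u\<in>carrier G. f t * g u * h (t \<otimes> u))"
proof -
  define P where "P = (\<lambda>(t,s). f t * g (inv t \<otimes> s) * h s)"
  have bij: "bij_betw (\<lambda>(t,u). (t, t \<otimes> u)) (carrier G \<times> carrier G) (carrier G \<times> carrier G)"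
    by (rule bij_betw_byWitness[where f' = "\<lambda>(t,s). (t, inv t \<otimes> s)"]) (auto simp: m_assoc[symmetric])
  have "(\<lambda>x. norm (P ((\<lambda>(t,u). (t, t \<otimes> u)) x))) summable_on carrier G \<times> carrier G"
    using abs by (rule summable_on_cong[THEN iffD1, rotated]) (auto simp: P_def m_assoc[symmetric])
  then have "(\<lambda>x. norm (P x)) summable_on carrier G \<times> carrier G"
    using summable_on_reindex_bij_betw[OF bij, of "\<lambda>x. norm (P x)"] by (simp add: o_def)
  then have Psum: "P summable_on carrier G \<times> carrier G"
    by (rule abs_summable_summable)
  have Psw: "(\<lambda>(s,t). P (t,s)) summable_on carrier G \<times> carrier G"
    using Psum summable_on_swap[of P "carrier G" "carrier G"] by simp
  have eq: "conv G f g s * h s = (\<Sum>\<^sub>\<infinity>t\<in>carrier G. P (t,s))" for s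
    unfolding conv_def P_def by (simp add: infsum_cmult_left')
  show "(\<lambda>s. conv G f g s * h s) summable_on carrier G"
    unfolding eq using summable_on_Sigma_banach[of "\<lambda>s t. P (t,s)" "carrier G" "\<lambda>_. carrier G"] Psw
    by simp
  have "(\<Sum>\<^sub>\<infinity>s\<in>carrier G. conv G f g s * h s) = (\<Sum>\<^sub>\<infinity>s\<in>carrier G. \<Sum>\<^sub>\<infinity>t\<in>carrier G. P (t,s))"
    unfolding eq ..
  also have "\<dots> = (\<Sum>\<^sub>\<infinity>t\<in>carrier G. \<Sum>\<^sub>\<infinity>s\<in>carrier G. P (t,s))"
    using infsum_swap_banach[of "\<lambda>t s. P (t,s)"] Psum by simp
  also have "\<dots> = (\<Sum>\<^sub>\<infinity>t\<in>carrier G. \<Sum>\<^sub>\<infinity>u\<in>carrier G. f t * g u * h (t \<otimes> u))"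
  proof (rule infsum_cong)
    fix t assume t: "t \<in> carrier G"
    have "(\<Sum>\<^sub>\<infinity>u\<in>carrier G. f t * g u * h (t \<otimes> u)) = (\<Sum>\<^sub>\<infinity>u\<in>carrier G. P (t, t \<otimes> u))"
      using t by (intro infsum_cong) (simp add: P_def m_assoc[symmetric])
    then show "(\<Sum>\<^sub>\<infinity>s\<in>carrier G. P (t,s)) = (\<Sum>\<^sub>\<infinity>u\<in>carrier G. f t * g u * h (t \<otimes> u))"
      using infsum_mult_left_reindex[OF t, of "\<lambda>s. P (t,s)"] by simp
  qed
  finally show "(\<Sum>\<^sub>\<infinity>s\<in>carrier G. conv G f g s * h s)
      = (\<Sum>\<^sub>\<infinity>t\<in>carrier G. \<Sum>\<^sub>\<infinity>u\<in>carrier G. f t * g u * h (t \<otimes> u))" .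
qed

lemma has_sum_conv_nonneg:
  fixes f g :: "'a \<Rightarrow> real"
  assumes "\<And>s. s \<in> carrier G \<Longrightarrow> 0 \<le> f s" "\<And>s. s \<in> carrier G \<Longrightarrow> 0 \<le> g s"
    and f: "(f has_sum A) (carrier G)" and g: "(g has_sum B) (carrier G)"
  shows "(conv G f g has_sum A * B) (carrier G)"
proof -
  have "(\<lambda>p. norm ((\<lambda>(t,u). f t * g u * 1) p)) summable_on carrier G \<times> carrier G"
    by (rule abs_summable_on_Times_product_bound[OF has_sum_imp_summable[OF f] has_sum_imp_summable[OF g]])
      (use assms(1,2) in \<open>simp_all add: abs_mult\<close>)
  then have abs: "(\<lambda>(t,u). norm (f t * g u * 1)) summable_on carrier G \<times> carrier G"
    by (simp add: case_prod_unfold)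
  have "(\<Sum>\<^sub>\<infinity>s\<in>carrier G. conv G f g s * 1) = (\<Sum>\<^sub>\<infinity>t\<in>carrier G. f t * B)"
    unfolding infsum_conv_mult(2)[OF abs]
    by (intro infsum_cong) (simp add: infsum_cmult_right' infsumI[OF g])
  also have "\<dots> = A * B" using f by (simp add: infsum_cmult_left' infsumI)
  finally show ?thesis
    using infsum_conv_mult(1)[OF abs] by (simp add: has_sum_iff)
qed

end

section \<open>Weighted \<open>\<ell>\<^sup>1\<close> algebras\<close>

locale weighted_group = group G for G :: "('a,'m) monoid_scheme" (structure) +
  fixes v :: "'a \<Rightarrow> real" and b K :: real
  assumes lower_bound_pos: "0 < b"
    and weight_ge: "\<And>s. s \<in> carrier G \<Longrightarrow> b \<le> v s"
    and weight_submult: "\<And>s t. s \<in> carrier G \<Longrightarrow> t \<in> carrier G \<Longrightarrow> v (s \<otimes> t) \<le> K * v s * v t"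
begin

definition in_l1 :: "('a \<Rightarrow> 'b::{real_normed_field,banach}) \<Rightarrow> bool" where
  "in_l1 f \<longleftrightarrow> (\<lambda>s. norm (f s) * v s) summable_on carrier G"

definition l1_norm :: "('a \<Rightarrow> 'b::{real_normed_field,banach}) \<Rightarrow> real" where
  "l1_norm f = (\<Sum>\<^sub>\<infinity>s\<in>carrier G. norm (f s) * v s)"

lemma weight_pos: "s \<in> carrier G \<Longrightarrow> 0 < v s"
  using weight_ge lower_bound_pos by force

lemma one_le_const_weight_one: "1 \<le> K * v \<one>"
proof -
  have "v \<one> \<le> K * v \<one> * v \<one>" using weight_submult[of \<one> \<one>] by simp
  then show ?thesis using weight_pos[of \<one>] by (simp add: mult.commute)
qed

lemma const_pos: "0 < K"
  using one_le_const_weight_one weight_pos[of \<one>] by (smt (verit) mult_nonpos_nonneg one_closed)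

lemma l1_norm_cong: "(\<And>x. x \<in> carrier G \<Longrightarrow> f x = f' x) \<Longrightarrow> l1_norm f = l1_norm f'"
  unfolding l1_norm_def by (intro infsum_cong) simp

lemma l1_norm_nonneg: "0 \<le> l1_norm f"
  unfolding l1_norm_def by (intro infsum_nonneg) (simp add: less_imp_le weight_pos)

lemma has_sum_l1_norm: "in_l1 f \<Longrightarrow> ((\<lambda>s. norm (f s) * v s) has_sum l1_norm f) (carrier G)"
  unfolding in_l1_def l1_norm_def by simp

lemma norm_le_weighted: "s \<in> carrier G \<Longrightarrow> norm (f s) \<le> norm (f s) * v s / b"
proof -
  assume "s \<in> carrier G"
  then have "norm (f s) * b \<le> norm (f s) * v s" using weight_ge by (simp add: mult_left_mono)
  then show ?thesis using lower_bound_pos by (simp add: field_simps)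
qed

lemma in_l1_imp_abs_summable:
  assumes "in_l1 f" shows "(\<lambda>s. norm (f s)) summable_on carrier G"
proof (rule summable_on_comparison_test)
  show "(\<lambda>s. norm (f s) * v s / b) summable_on carrier G"
    using assms unfolding in_l1_def by (rule summable_on_divide_const)
qed (simp_all add: norm_le_weighted)

lemma infsum_norm_le_l1_norm:
  assumes "in_l1 f" shows "(\<Sum>\<^sub>\<infinity>s\<in>carrier G. norm (f s)) \<le> l1_norm f / b"
proof -
  have sum: "((\<lambda>s. norm (f s) * v s / b) has_sum l1_norm f / b) (carrier G)"
    by (rule has_sum_divide_const[OF has_sum_l1_norm[OF assms]])
  show ?thesis
    by (rule infsum_mono[OF in_l1_imp_abs_summable[OF assms] has_sum_imp_summable[OF sum],
          unfolded infsumI[OF sum]])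
      (rule norm_le_weighted)
qed

lemma weighted_le_l1_norm:
  assumes "in_l1 f" "s \<in> carrier G" shows "norm (f s) * v s \<le> l1_norm f"
proof -
  have "sum (\<lambda>s. norm (f s) * v s) {s} \<le> l1_norm f"
    unfolding l1_norm_def using assms weight_pos
    by (intro finite_sum_le_infsum) (auto simp: in_l1_def less_imp_le)
  then show ?thesis by simp
qed

lemma norm_le_l1_norm:
  assumes "in_l1 f" "s \<in> carrier G" shows "norm (f s) \<le> l1_norm f / b"
proof -
  have "norm (f s) * v s / b \<le> l1_norm f / b"
    using weighted_le_l1_norm[OF assms] lower_bound_pos by (simp add: divide_right_mono)
  then show ?thesis using norm_le_weighted[OF assms(2), of f] by linarith
qed

lemma abs_summable_conv_term:
  assumes "in_l1 f" "in_l1 g" "s \<in> carrier G"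
  shows "(\<lambda>t. norm (f t * g (inv t \<otimes> s))) summable_on carrier G"
  using in_l1_imp_abs_summable[OF assms(1)] norm_le_l1_norm[OF assms(2)] assms(3)
  by (rule abs_summable_conv_term_bounded)

lemma summable_conv_term:
  "in_l1 f \<Longrightarrow> in_l1 g \<Longrightarrow> s \<in> carrier G \<Longrightarrow> (\<lambda>t. f t * g (inv t \<otimes> s)) summable_on carrier G"
  by (rule abs_summable_summable, rule abs_summable_conv_term)

text \<open>The pointwise bound behind \<open>\<parallel>f * g\<parallel> \<le> K \<parallel>f\<parallel> \<parallel>g\<parallel>\<close>: submultiplicativity of the weight
  moves \<open>v s\<close> inside the convolution.\<close>

lemma norm_conv_weighted_le:
  fixes f g :: "'a \<Rightarrow> 'b::{real_normed_field,banach}"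
  assumes f: "in_l1 f" and g: "in_l1 g" and s: "s \<in> carrier G"
  shows "norm (conv G f g s) * v s \<le> K * conv G (\<lambda>t. norm (f t) * v t) (\<lambda>t. norm (g t) * v t) s"
proof -
  let ?F = "\<lambda>t. norm (f t) * v t" and ?H = "\<lambda>t. norm (g t) * v t"
  have "norm (conv G f g s) \<le> (\<Sum>\<^sub>\<infinity>t\<in>carrier G. norm (f t * g (inv t \<otimes> s)))"
    unfolding conv_def by (rule norm_infsum_bound) (rule abs_summable_conv_term[OF f g s])
  then have "norm (conv G f g s) * v s \<le> (\<Sum>\<^sub>\<infinity>t\<in>carrier G. norm (f t * g (inv t \<otimes> s)) * v s)"
    using weight_pos[OF s] by (simp add: mult_right_mono infsum_cmult_left')
  also have "\<dots> \<le> (\<Sum>\<^sub>\<infinity>t\<in>carrier G. K * (?F t * ?H (inv t \<otimes> s)))"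
  proof (rule infsum_mono)
    show "(\<lambda>t. norm (f t * g (inv t \<otimes> s)) * v s) summable_on carrier G"
      by (intro summable_on_cmult_left abs_summable_conv_term[OF f g s])
    have "(\<lambda>t. norm (?F t * ?H (inv t \<otimes> s))) summable_on carrier G"
    proof (rule abs_summable_conv_term_bounded[OF _ _ s])
      show "(\<lambda>t. norm (?F t)) summable_on carrier G"
        using f unfolding in_l1_def
        by (rule summable_on_cong[THEN iffD1, rotated]) (simp add: weight_pos less_imp_le)
      show "norm (?H x) \<le> l1_norm g" if "x \<in> carrier G" for x
        using weighted_le_l1_norm[OF g that] weight_pos[OF that] by simp
    qed
    from abs_summable_summable[OF this]
    show "(\<lambda>t. K * (?F t * ?H (inv t \<otimes> s))) summable_on carrier G"
      by (rule summable_on_cmult_right)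
    fix t assume t: "t \<in> carrier G"
    have "v s \<le> K * v t * v (inv t \<otimes> s)"
      using weight_submult[of t "inv t \<otimes> s"] t s by (simp add: m_assoc[symmetric])
    then have "norm (f t) * norm (g (inv t \<otimes> s)) * v s
        \<le> norm (f t) * norm (g (inv t \<otimes> s)) * (K * v t * v (inv t \<otimes> s))"
      by (intro mult_left_mono) simp_all
    then show "norm (f t * g (inv t \<otimes> s)) * v s \<le> K * (?F t * ?H (inv t \<otimes> s))"
      by (simp add: norm_mult algebra_simps)
  qed
  also have "\<dots> = K * conv G ?F ?H s" unfolding conv_def by (rule infsum_cmult_right')
  finally show ?thesis .
qed

lemma in_l1_conv_and_norm_le:
  fixes f g :: "'a \<Rightarrow> 'b::{real_normed_field,banach}"
  assumes f: "in_l1 f" and g: "in_l1 g"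
  shows "in_l1 (conv G f g) \<and> l1_norm (conv G f g) \<le> K * l1_norm f * l1_norm g"
proof -
  let ?S = "\<lambda>s. K * conv G (\<lambda>t. norm (f t) * v t) (\<lambda>t. norm (g t) * v t) s"
  have "(?S has_sum K * (l1_norm f * l1_norm g)) (carrier G)"
    by (intro has_sum_cmult_right has_sum_conv_nonneg has_sum_l1_norm f g)
      (simp_all add: weight_pos less_imp_le)
  then have S: "?S summable_on carrier G" "infsum ?S (carrier G) = K * l1_norm f * l1_norm g"
    by (auto simp: has_sum_iff)
  have L: "in_l1 (conv G f g)" unfolding in_l1_def
    by (rule summable_on_comparison_test[OF S(1) norm_conv_weighted_le[OF f g]])
      (simp_all add: weight_pos less_imp_le)
  moreover have "l1_norm (conv G f g) \<le> infsum ?S (carrier G)"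
    unfolding l1_norm_def[of "conv G f g"]
    by (rule infsum_mono[OF L[unfolded in_l1_def] S(1) norm_conv_weighted_le[OF f g]])
  ultimately show ?thesis using S(2) by simp
qed

lemma conv_assoc:
  fixes f g h :: "'a \<Rightarrow> 'b::{real_normed_field,banach}"
  assumes f: "in_l1 f" and g: "in_l1 g" and h: "in_l1 h" and s: "s \<in> carrier G"
  shows "conv G (conv G f g) h s = conv G f (conv G g h) s"
proof -
  let ?h = "\<lambda>u. h (inv u \<otimes> s)"
  define M where "M = l1_norm h / b"
  have "(\<lambda>p. norm ((\<lambda>(t,u). f t * g u * ?h (t \<otimes> u)) p)) summable_on carrier G \<times> carrier G"
  proof (rule abs_summable_on_Times_product_bound)
    show "(\<lambda>t. norm (f t)) summable_on carrier G" by (rule in_l1_imp_abs_summable[OF f])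
    show "(\<lambda>u. norm (g u) * M) summable_on carrier G"
      by (intro summable_on_cmult_left in_l1_imp_abs_summable[OF g])
    show "0 \<le> norm (g u) * M" for u unfolding M_def using l1_norm_nonneg[of h] lower_bound_pos by simp
    fix t u assume "t \<in> carrier G" "u \<in> carrier G"
    then have "norm (?h (t \<otimes> u)) \<le> M" unfolding M_def using norm_le_l1_norm[OF h] s by simp
    from mult_left_mono[OF this, of "norm (f t) * norm (g u)"]
    show "norm ((\<lambda>(t,u). f t * g u * ?h (t \<otimes> u)) (t,u)) \<le> norm (f t) * (norm (g u) * M)"
      by (simp add: norm_mult mult.assoc)
  qed simp
  then have abs: "(\<lambda>(t,u). norm (f t * g u * ?h (t \<otimes> u))) summable_on carrier G \<times> carrier G"
    by (simp add: case_prod_unfold)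
  have "conv G (conv G f g) h s = (\<Sum>\<^sub>\<infinity>t\<in>carrier G. \<Sum>\<^sub>\<infinity>u\<in>carrier G. f t * g u * ?h (t \<otimes> u))"
    unfolding infsum_conv_mult(2)[OF abs, symmetric] by (simp add: conv_def)
  also have "\<dots> = (\<Sum>\<^sub>\<infinity>t\<in>carrier G. f t * conv G g h (inv t \<otimes> s))"
  proof (rule infsum_cong)
    fix t assume t: "t \<in> carrier G"
    have "(\<Sum>\<^sub>\<infinity>u\<in>carrier G. f t * g u * ?h (t \<otimes> u))
        = f t * (\<Sum>\<^sub>\<infinity>u\<in>carrier G. g u * h (inv u \<otimes> (inv t \<otimes> s)))"
      unfolding infsum_cmult_right'[symmetric] using t s
      by (intro infsum_cong) (simp add: inv_mult_group m_assoc mult.assoc)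
    then show "(\<Sum>\<^sub>\<infinity>u\<in>carrier G. f t * g u * ?h (t \<otimes> u)) = f t * conv G g h (inv t \<otimes> s)"
      by (simp add: conv_def)
  qed
  also have "\<dots> = conv G f (conv G g h) s" unfolding conv_def ..
  finally show ?thesis .
qed

lemma in_l1_delta: "in_l1 (delta G :: 'a \<Rightarrow> 'b::{real_normed_field,banach})"
  and l1_norm_delta: "l1_norm (delta G :: 'a \<Rightarrow> 'b::{real_normed_field,banach}) = v \<one>"
proof -
  have "((\<lambda>s. norm (delta G s :: 'b) * v s) has_sum (norm (delta G \<one> :: 'b) * v \<one>)) (carrier G)"
    by (rule has_sum_single_nonzero) (auto simp: delta_def)
  then show "in_l1 (delta G :: 'a \<Rightarrow> 'b)" "l1_norm (delta G :: 'a \<Rightarrow> 'b) = v \<one>"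
    unfolding in_l1_def l1_norm_def by (auto simp: summable_on_def delta_def infsumI)
qed

lemma in_l1_scale:
  fixes f :: "'a \<Rightarrow> 'b::{real_normed_field,banach}"
  assumes "in_l1 f" shows "in_l1 (\<lambda>s. c * f s) \<and> l1_norm (\<lambda>s. c * f s) = norm c * l1_norm f"
proof -
  have e: "norm (c * f s) * v s = norm c * (norm (f s) * v s)" for s by (simp add: norm_mult)
  show ?thesis using assms unfolding in_l1_def l1_norm_def e
    by (simp add: summable_on_cmult_right infsum_cmult_right')
qed

lemma in_l1_lincomb_and_norm_le:
  fixes f1 f2 :: "'a \<Rightarrow> 'b::{real_normed_field,banach}"
  assumes "in_l1 f1" "in_l1 f2"
  shows "in_l1 (\<lambda>x. a * f1 x + c * f2 x)
    \<and> l1_norm (\<lambda>x. a * f1 x + c * f2 x) \<le> norm a * l1_norm f1 + norm c * l1_norm f2"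
proof -
  let ?B = "\<lambda>x. norm a * (norm (f1 x) * v x) + norm c * (norm (f2 x) * v x)"
  have sm: "?B summable_on carrier G"
    using assms unfolding in_l1_def by (intro summable_on_add summable_on_cmult_right)
  have le: "norm (a * f1 x + c * f2 x) * v x \<le> ?B x" if "x \<in> carrier G" for x
  proof -
    have "norm (a * f1 x + c * f2 x) * v x \<le> (norm a * norm (f1 x) + norm c * norm (f2 x)) * v x"
      using weight_pos[OF that] by (intro mult_right_mono) (auto intro: norm_triangle_le simp: norm_mult)
    then show ?thesis by (simp add: algebra_simps)
  qed
  have L: "in_l1 (\<lambda>x. a * f1 x + c * f2 x)" unfolding in_l1_def
    by (rule summable_on_comparison_test[OF sm le]) (auto intro!: mult_nonneg_nonneg less_imp_le[OF weight_pos])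
  have "l1_norm (\<lambda>x. a * f1 x + c * f2 x) \<le> infsum ?B (carrier G)"
    unfolding l1_norm_def[of "\<lambda>x. a * f1 x + c * f2 x"] by (rule infsum_mono[OF L[unfolded in_l1_def] sm le])
  also have "\<dots> = norm a * l1_norm f1 + norm c * l1_norm f2"
    using assms unfolding in_l1_def l1_norm_def
    by (subst infsum_add) (auto intro: summable_on_cmult_right simp: infsum_cmult_right')
  finally show ?thesis using L by simp
qed

lemma conv_lincomb_left:
  fixes f1 f2 g :: "'a \<Rightarrow> 'b::{real_normed_field,banach}"
  assumes "in_l1 f1" "in_l1 f2" "in_l1 g" "s \<in> carrier G"
  shows "conv G (\<lambda>x. a * f1 x + c * f2 x) g s = a * conv G f1 g s + c * conv G f2 g s"
proof -
  have "conv G (\<lambda>x. a * f1 x + c * f2 x) g s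
      = (\<Sum>\<^sub>\<infinity>t\<in>carrier G. a * (f1 t * g (inv t \<otimes> s)) + c * (f2 t * g (inv t \<otimes> s)))"
    unfolding conv_def by (intro infsum_cong) (simp add: algebra_simps)
  also have "\<dots> = a * conv G f1 g s + c * conv G f2 g s"
    unfolding conv_def using assms
    by (subst infsum_add) (auto intro!: summable_on_cmult_right summable_conv_term simp: infsum_cmult_right')
  finally show ?thesis .
qed

lemma conv_lincomb_right:
  fixes f g1 g2 :: "'a \<Rightarrow> 'b::{real_normed_field,banach}"
  assumes "in_l1 f" "in_l1 g1" "in_l1 g2" "s \<in> carrier G"
  shows "conv G f (\<lambda>x. a * g1 x + c * g2 x) s = a * conv G f g1 s + c * conv G f g2 s"
proof -
  have "conv G f (\<lambda>x. a * g1 x + c * g2 x) s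
      = (\<Sum>\<^sub>\<infinity>t\<in>carrier G. a * (f t * g1 (inv t \<otimes> s)) + c * (f t * g2 (inv t \<otimes> s)))"
    unfolding conv_def by (intro infsum_cong) (simp add: algebra_simps)
  also have "\<dots> = a * conv G f g1 s + c * conv G f g2 s"
    unfolding conv_def using assms
    by (subst infsum_add) (auto intro!: summable_on_cmult_right summable_conv_term simp: infsum_cmult_right')
  finally show ?thesis .
qed

context
  fixes F :: "nat \<Rightarrow> 'a \<Rightarrow> 'b::{real_normed_field,banach}"
  assumes in_l1_terms: "\<And>n. in_l1 (F n)" and summable_norms: "(\<lambda>n. l1_norm (F n)) summable_on UNIV"
begin

lemma summable_norms_div: "(\<lambda>n. l1_norm (F n) / b) summable_on UNIV"
  using summable_norms by (rule summable_on_divide_const)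

lemma abs_summable_series_at: "s \<in> carrier G \<Longrightarrow> (\<lambda>n. norm (F n s)) summable_on UNIV"
  by (rule summable_on_comparison_test[OF summable_norms_div]) (use norm_le_l1_norm[OF in_l1_terms] in auto)

lemma summable_series_at: "s \<in> carrier G \<Longrightarrow> (\<lambda>n. F n s) summable_on UNIV"
  by (rule abs_summable_summable, rule abs_summable_series_at)

lemma in_l1_series_and_norm_le:
  "in_l1 (\<lambda>s. \<Sum>\<^sub>\<infinity>n. F n s) \<and> l1_norm (\<lambda>s. \<Sum>\<^sub>\<infinity>n. F n s) \<le> (\<Sum>\<^sub>\<infinity>n. l1_norm (F n))"
proof -
  define Q where "Q = (\<lambda>(n,s). norm (F n s) * v s)"
  have "Q summable_on UNIV \<times> carrier G"
    by (rule summable_on_SigmaI[where g = "\<lambda>n. l1_norm (F n)"])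
       (auto simp: Q_def has_sum_l1_norm[OF in_l1_terms] summable_norms
         intro!: mult_nonneg_nonneg less_imp_le[OF weight_pos])
  then have Qsw: "(\<lambda>(s,n). Q (n,s)) summable_on carrier G \<times> UNIV"
    using summable_on_swap[of Q UNIV "carrier G"] by simp
  define T where "T = (\<lambda>s. \<Sum>\<^sub>\<infinity>n. Q (n,s))"
  have Tsum: "T summable_on carrier G"
    unfolding T_def using summable_on_Sigma_banach[of "\<lambda>s n. Q (n,s)" "carrier G" "\<lambda>_. UNIV"] Qsw
    by simp
  have Ttot: "infsum T (carrier G) = (\<Sum>\<^sub>\<infinity>n. l1_norm (F n))"
    unfolding T_def using infsum_swap_banach[of "\<lambda>s n. Q (n,s)" "carrier G" UNIV] Qsw
    by (simp add: Q_def l1_norm_def)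
  have pt: "norm (\<Sum>\<^sub>\<infinity>n. F n s) * v s \<le> T s" if s: "s \<in> carrier G" for s
  proof -
    have "norm (\<Sum>\<^sub>\<infinity>n. F n s) \<le> (\<Sum>\<^sub>\<infinity>n. norm (F n s))"
      by (rule norm_infsum_bound) (use abs_summable_series_at[OF s] in simp)
    then show ?thesis
      using weight_pos[OF s] unfolding T_def Q_def by (simp add: mult_right_mono infsum_cmult_left')
  qed
  have L: "in_l1 (\<lambda>s. \<Sum>\<^sub>\<infinity>n. F n s)" unfolding in_l1_def
    by (rule summable_on_comparison_test[OF Tsum pt]) (auto intro!: mult_nonneg_nonneg less_imp_le[OF weight_pos])
  moreover have "l1_norm (\<lambda>s. \<Sum>\<^sub>\<infinity>n. F n s) \<le> infsum T (carrier G)"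
    unfolding l1_norm_def[of "\<lambda>s. \<Sum>\<^sub>\<infinity>n. F n s"] by (rule infsum_mono[OF L[unfolded in_l1_def] Tsum pt])
  ultimately show ?thesis using Ttot by simp
qed

lemma conv_series_right:
  assumes f: "in_l1 f" and s: "s \<in> carrier G"
  shows "conv G f (\<lambda>s. \<Sum>\<^sub>\<infinity>n. F n s) s = (\<Sum>\<^sub>\<infinity>n. conv G f (F n) s)"
proof -
  have "(\<lambda>p. norm ((\<lambda>(t,n). f t * F n (inv t \<otimes> s)) p)) summable_on carrier G \<times> UNIV"
  proof (rule abs_summable_on_Times_product_bound[OF in_l1_imp_abs_summable[OF f] summable_norms_div])
    fix t n assume "t \<in> carrier G"
    then have "norm (F n (inv t \<otimes> s)) \<le> l1_norm (F n) / b" using norm_le_l1_norm[OF in_l1_terms] s by simp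
    from mult_left_mono[OF this, of "norm (f t)"]
    show "norm ((\<lambda>(t,n). f t * F n (inv t \<otimes> s)) (t,n)) \<le> norm (f t) * (l1_norm (F n) / b)"
      by (simp add: norm_mult)
  qed (auto intro: divide_nonneg_pos l1_norm_nonneg lower_bound_pos)
  then have P: "(\<lambda>(t,n). f t * F n (inv t \<otimes> s)) summable_on carrier G \<times> UNIV"
    by (rule abs_summable_summable)
  have "conv G f (\<lambda>s. \<Sum>\<^sub>\<infinity>n. F n s) s = (\<Sum>\<^sub>\<infinity>t\<in>carrier G. \<Sum>\<^sub>\<infinity>n. f t * F n (inv t \<otimes> s))"
    unfolding conv_def by (simp add: infsum_cmult_right')
  also have "\<dots> = (\<Sum>\<^sub>\<infinity>n. conv G f (F n) s)"
    unfolding conv_def by (rule infsum_swap_banach[OF P])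
  finally show ?thesis .
qed

lemma conv_series_left:
  assumes f: "in_l1 f" and s: "s \<in> carrier G"
  shows "conv G (\<lambda>s. \<Sum>\<^sub>\<infinity>n. F n s) f s = (\<Sum>\<^sub>\<infinity>n. conv G (F n) f s)"
proof -
  define M where "M = l1_norm f / b"
  have M0: "0 \<le> M" unfolding M_def using l1_norm_nonneg[of f] lower_bound_pos by simp
  have "(\<lambda>p. norm ((\<lambda>(n,t). F n t * f (inv t \<otimes> s)) p)) summable_on UNIV \<times> carrier G"
  proof (rule abs_summable_on_Times_dominated[where \<gamma> = "\<lambda>(n,t). norm (F n t) * M"
        and r = "\<lambda>n. (\<Sum>\<^sub>\<infinity>t\<in>carrier G. norm (F n t)) * M"])
    show "((\<lambda>t. case (n, t) of (n, t) \<Rightarrow> norm (F n t) * M) has_sum (\<Sum>\<^sub>\<infinity>t\<in>carrier G. norm (F n t)) * M)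
        (carrier G)" for n
      using in_l1_imp_abs_summable[OF in_l1_terms] by (simp add: has_sum_cmult_left)
    show "(\<lambda>n. (\<Sum>\<^sub>\<infinity>t\<in>carrier G. norm (F n t)) * M) summable_on UNIV"
    proof (rule summable_on_comparison_test[OF summable_on_cmult_left[OF summable_norms_div, of M]])
      show "(\<Sum>\<^sub>\<infinity>t\<in>carrier G. norm (F n t)) * M \<le> l1_norm (F n) / b * M" for n
        using infsum_norm_le_l1_norm[OF in_l1_terms] M0 by (rule mult_right_mono)
      show "0 \<le> (\<Sum>\<^sub>\<infinity>t\<in>carrier G. norm (F n t)) * M" for n
        using M0 by (simp add: infsum_nonneg)
    qed
    fix n t assume t: "t \<in> carrier G"
    then have "norm (f (inv t \<otimes> s)) \<le> M" unfolding M_def using norm_le_l1_norm[OF f] s by simp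
    then show "norm ((\<lambda>(n,t). F n t * f (inv t \<otimes> s)) (n,t)) \<le> (case (n, t) of (n, t) \<Rightarrow> norm (F n t) * M)"
      by (simp add: norm_mult mult_left_mono)
  qed (use M0 in auto)
  then have P: "(\<lambda>(n,t). F n t * f (inv t \<otimes> s)) summable_on UNIV \<times> carrier G"
    by (rule abs_summable_summable)
  have "conv G (\<lambda>s. \<Sum>\<^sub>\<infinity>n. F n s) f s = (\<Sum>\<^sub>\<infinity>t\<in>carrier G. \<Sum>\<^sub>\<infinity>n. F n t * f (inv t \<otimes> s))"
    unfolding conv_def by (simp add: infsum_cmult_left')
  also have "\<dots> = (\<Sum>\<^sub>\<infinity>n. conv G (F n) f s)"
    unfolding conv_def by (rule infsum_swap_banach[OF P, symmetric])
  finally show ?thesis .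
qed

end

lemma in_l1_conv_pow: "in_l1 f \<Longrightarrow> in_l1 (conv_pow G f n)"
  by (induction n) (auto simp: in_l1_delta in_l1_conv_and_norm_le)

lemma conv_pow_add:
  assumes f: "in_l1 f"
  shows "s \<in> carrier G \<Longrightarrow> conv_pow G f (n + m) s = conv G (conv_pow G f n) (conv_pow G f m) s"
proof (induction n arbitrary: s)
  case 0
  then show ?case by (simp add: conv_delta_left)
next
  case (Suc n)
  have "conv_pow G f (Suc n + m) s = conv G f (conv_pow G f (n + m)) s" by simp
  also have "\<dots> = conv G f (conv G (conv_pow G f n) (conv_pow G f m)) s"
    by (rule conv_cong[OF Suc.prems]) (simp_all add: Suc.IH)
  also have "\<dots> = conv G (conv G f (conv_pow G f n)) (conv_pow G f m) s"
    by (rule conv_assoc[symmetric]) (use f in_l1_conv_pow[OF f] Suc.prems in auto)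
  finally show ?case by simp
qed

lemma conv_pow_Suc_right:
  assumes f: "in_l1 f" and s: "s \<in> carrier G"
  shows "conv G (conv_pow G f n) f s = conv_pow G f (Suc n) s"
proof -
  have "conv_pow G f (Suc n) s = conv G (conv_pow G f n) (conv_pow G f 1) s"
    using conv_pow_add[OF f s, of n 1] by simp
  also have "\<dots> = conv G (conv_pow G f n) f s"
    by (rule conv_cong[OF s]) (simp_all add: conv_delta_right)
  finally show ?thesis by simp
qed

lemma l1_norm_conv_pow_add_le:
  assumes f: "in_l1 f"
  shows "l1_norm (conv_pow G f (n + m)) \<le> K * l1_norm (conv_pow G f n) * l1_norm (conv_pow G f m)"
proof -
  have "l1_norm (conv_pow G f (n + m)) = l1_norm (conv G (conv_pow G f n) (conv_pow G f m))"
    by (rule l1_norm_cong) (rule conv_pow_add[OF f])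
  then show ?thesis using in_l1_conv_and_norm_le[OF in_l1_conv_pow[OF f] in_l1_conv_pow[OF f]] by simp
qed

end

section \<open>The spectral radius of a probability measure\<close>

locale weighted_group_prob = weighted_group +
  fixes \<mu> :: "'a \<Rightarrow> real"
  assumes prob_nonneg: "\<And>s. s \<in> carrier G \<Longrightarrow> 0 \<le> \<mu> s"
    and prob_has_sum: "(\<mu> has_sum 1) (carrier G)"
    and in_l1_prob: "in_l1 \<mu>"
begin

abbreviation \<mu>\<^sub>c :: "'a \<Rightarrow> complex" where "\<mu>\<^sub>c \<equiv> \<lambda>s. complex_of_real (\<mu> s)"

lemma conv_pow_nonneg: "0 \<le> conv_pow G \<mu> n s"
proof (induction n arbitrary: s)
  case 0 then show ?case by (simp add: delta_def)
next
  case (Suc n) then show ?case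
    by (simp add: conv_def) (intro infsum_nonneg mult_nonneg_nonneg prob_nonneg)
qed

lemma has_sum_conv_pow: "(conv_pow G \<mu> n has_sum 1) (carrier G)"
proof (induction n)
  case 0
  have "(delta G has_sum (delta G \<one> :: real)) (carrier G)"
    by (rule has_sum_single_nonzero) (auto simp: delta_def)
  moreover have "delta G \<one> = (1::real)" by (simp add: delta_def)
  ultimately show ?case by simp
next
  case (Suc n)
  then show ?case
    using has_sum_conv_nonneg[OF prob_nonneg conv_pow_nonneg prob_has_sum] by simp
qed

lemma conv_pow_of_real: "conv_pow G \<mu>\<^sub>c n s = complex_of_real (conv_pow G \<mu> n s)"
proof (induction n arbitrary: s)
  case 0 then show ?case by (simp add: delta_def)
next
  case (Suc n) then show ?case
    by (simp add: conv_def infsum_of_real[symmetric])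
qed

lemma in_l1_prob_complex: "in_l1 \<mu>\<^sub>c"
  using in_l1_prob unfolding in_l1_def by simp

lemma l1_norm_conv_pow_of_real: "l1_norm (conv_pow G \<mu>\<^sub>c n) = l1_norm (conv_pow G \<mu> n)"
  unfolding l1_norm_def conv_pow_of_real by simp

lemma lower_bound_le_l1_norm_conv_pow: "b \<le> l1_norm (conv_pow G \<mu> n)"
proof -
  have "(\<Sum>\<^sub>\<infinity>s\<in>carrier G. conv_pow G \<mu> n s * b) \<le> l1_norm (conv_pow G \<mu> n)"
    unfolding l1_norm_def
  proof (rule infsum_mono)
    show "(\<lambda>s. conv_pow G \<mu> n s * b) summable_on carrier G"
      using has_sum_conv_pow[of n] by (intro summable_on_cmult_left has_sum_imp_summable)
    show "(\<lambda>s. norm (conv_pow G \<mu> n s) * v s) summable_on carrier G"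
      using in_l1_conv_pow[OF in_l1_prob] unfolding in_l1_def by blast
    fix s assume "s \<in> carrier G"
    then show "conv_pow G \<mu> n s * b \<le> norm (conv_pow G \<mu> n s) * v s"
      using conv_pow_nonneg[of n s] weight_ge by (simp add: mult_left_mono)
  qed
  moreover have "(\<Sum>\<^sub>\<infinity>s\<in>carrier G. conv_pow G \<mu> n s * b) = b"
    using has_sum_conv_pow[of n] by (simp add: infsum_cmult_left' infsumI)
  ultimately show ?thesis by simp
qed

text \<open>The norm of \<open>\<mu>\<^sup>*\<^sup>n\<close> for the submultiplicative weight \<open>K v\<close>.\<close>

definition pow_norm :: "nat \<Rightarrow> real" where
  "pow_norm n = K * l1_norm (conv_pow G \<mu> n)"

lemma pow_norm_pos: "0 < pow_norm n"
  unfolding pow_norm_def using lower_bound_le_l1_norm_conv_pow[of n] lower_bound_pos const_pos by simp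

lemma pow_norm_add_le: "pow_norm (n + m) \<le> pow_norm n * pow_norm m"
  unfolding pow_norm_def using l1_norm_conv_pow_add_le[OF in_l1_prob, of n m] const_pos
  by (simp add: algebra_simps mult_left_mono)

lemma one_le_pow_norm_0: "1 \<le> pow_norm 0"
  unfolding pow_norm_def using one_le_const_weight_one l1_norm_delta[where 'b = real] by simp

definition gelfand_radius :: real where
  "gelfand_radius = Inf ((\<lambda>n. root n (pow_norm n)) ` {n. 1 \<le> n})"

lemma bdd_below_roots: "bdd_below ((\<lambda>n. root n (pow_norm n)) ` {n. 1 \<le> n})"
  by (rule bdd_belowI[where m = 0]) (use pow_norm_pos in \<open>auto intro: less_imp_le\<close>)

lemma gelfand_radius_nonneg: "0 \<le> gelfand_radius"
  unfolding gelfand_radius_def by (rule cInf_greatest) (use pow_norm_pos in \<open>auto intro: less_imp_le\<close>)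

lemma gelfand_radius_le_root: "1 \<le> n \<Longrightarrow> gelfand_radius \<le> root n (pow_norm n)"
  unfolding gelfand_radius_def by (rule cInf_lower[OF _ bdd_below_roots]) auto

lemma gelfand_radius_pow_le: "gelfand_radius ^ n \<le> pow_norm n"
proof (cases "n = 0")
  case True then show ?thesis using one_le_pow_norm_0 by simp
next
  case False
  then have "gelfand_radius ^ n \<le> (root n (pow_norm n)) ^ n"
    using gelfand_radius_le_root[of n] gelfand_radius_nonneg by (intro power_mono) auto
  also have "\<dots> = pow_norm n" using False pow_norm_pos[of n] by (simp add: real_root_pow_pos2 less_imp_le)
  finally show ?thesis .
qed

lemma root_less_if_gelfand_radius_less:
  "gelfand_radius < r \<Longrightarrow> \<exists>m. 1 \<le> m \<and> root m (pow_norm m) < r"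
  unfolding gelfand_radius_def by (drule cInf_lessD[rotated]) auto

lemma pow_norm_le_geometric:
  assumes m: "1 \<le> m"
  shows "\<exists>B. \<forall>n. pow_norm n \<le> B * root m (pow_norm m) ^ n"
proof -
  define l where "l = root m (pow_norm m)"
  have l0: "0 < l" unfolding l_def using pow_norm_pos m by simp
  have lm: "l ^ m = pow_norm m"
    unfolding l_def using pow_norm_pos[of m] m by (simp add: real_root_pow_pos2 less_imp_le)
  define B where "B = Max ((\<lambda>j. pow_norm j / l ^ j) ` {..<m})"
  have "pow_norm n \<le> B * l ^ n" for n
  proof (induction n rule: less_induct)
    case (less n)
    show ?case
    proof (cases "n < m")
      case True
      then have "pow_norm n / l ^ n \<le> B" unfolding B_def by (intro Max_ge) auto
      then show ?thesis using l0 by (simp add: field_simps)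
    next
      case False
      then have n: "n = m + (n - m)" by simp
      have "pow_norm n \<le> pow_norm m * pow_norm (n - m)" using pow_norm_add_le[of m "n - m"] n by simp
      also have "\<dots> \<le> pow_norm m * (B * l ^ (n - m))"
        using less.IH[of "n - m"] m False pow_norm_pos[of m] by (intro mult_left_mono) auto
      also have "\<dots> = B * l ^ (m + (n - m))" unfolding lm[symmetric] by (simp add: power_add)
      finally show ?thesis using n by simp
    qed
  qed
  then show ?thesis unfolding l_def by blast
qed

definition neumann_term :: "complex \<Rightarrow> nat \<Rightarrow> 'a \<Rightarrow> complex" where
  "neumann_term z n s = inverse z ^ Suc n * conv_pow G \<mu>\<^sub>c n s"

definition resolvent :: "complex \<Rightarrow> 'a \<Rightarrow> complex" where
  "resolvent z s = (\<Sum>\<^sub>\<infinity>n. neumann_term z n s)"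

lemma in_l1_neumann_term: "in_l1 (neumann_term z n)"
  unfolding neumann_term_def[abs_def] using in_l1_scale[OF in_l1_conv_pow[OF in_l1_prob_complex]] by blast

lemma l1_norm_neumann_term: "l1_norm (neumann_term z n) = norm (inverse z) ^ Suc n * (pow_norm n / K)"
  unfolding neumann_term_def[abs_def]
  using in_l1_scale[OF in_l1_conv_pow[OF in_l1_prob_complex], of "inverse z ^ Suc n" n] const_pos
  by (simp add: l1_norm_conv_pow_of_real pow_norm_def norm_power norm_mult)

lemma summable_l1_norm_neumann_term:
  assumes z: "gelfand_radius < norm z"
  shows "(\<lambda>n. l1_norm (neumann_term z n)) summable_on UNIV"
proof -
  obtain m where m: "1 \<le> m" "root m (pow_norm m) < norm z"
    using root_less_if_gelfand_radius_less[OF z] by blast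
  define l where "l = root m (pow_norm m)"
  obtain B where B: "\<And>n. pow_norm n \<le> B * l ^ n" using pow_norm_le_geometric[OF m(1)] unfolding l_def by blast
  have l0: "0 < l" unfolding l_def using pow_norm_pos m by simp
  have z0: "0 < norm z" using l0 m(2) unfolding l_def by linarith
  have B0: "0 < B" using B[of 0] pow_norm_pos[of 0] by simp
  define q where "q = l / norm z"
  have q: "0 \<le> q" "q < 1" unfolding q_def using l0 z0 m(2) l_def by auto
  define c where "c = B / (K * norm z)"
  have c0: "0 \<le> c" unfolding c_def using B0 const_pos z0 by simp
  have "(\<lambda>n. c * q ^ n) summable_on UNIV"
    using q c0 by (subst summable_on_UNIV_nonneg_real_iff) (auto intro!: summable_mult summable_geometric)
  then show ?thesis
  proof (rule summable_on_comparison_test)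
    fix n :: nat
    show "0 \<le> l1_norm (neumann_term z n)" by (rule l1_norm_nonneg)
    have "l1_norm (neumann_term z n) = (1 / norm z) ^ Suc n * (pow_norm n / K)"
      by (simp add: l1_norm_neumann_term norm_inverse divide_inverse)
    also have "\<dots> \<le> (1 / norm z) ^ Suc n * (B * l ^ n / K)"
      using B[of n] const_pos z0 by (intro mult_left_mono divide_right_mono) auto
    also have "\<dots> = c * q ^ n" unfolding c_def q_def using z0 const_pos
      by (simp add: field_simps power_divide)
    finally show "l1_norm (neumann_term z n) \<le> c * q ^ n" .
  qed
qed

lemma in_l1_resolvent: "gelfand_radius < norm z \<Longrightarrow> in_l1 (resolvent z)"
  unfolding resolvent_def[abs_def]
  using in_l1_series_and_norm_le[OF in_l1_neumann_term summable_l1_norm_neumann_term] by blast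

lemma summable_neumann_terms_at:
  "gelfand_radius < norm z \<Longrightarrow> s \<in> carrier G \<Longrightarrow> (\<lambda>n. neumann_term z n s) summable_on UNIV"
  using summable_series_at[OF in_l1_neumann_term summable_l1_norm_neumann_term] by blast

lemma resolvent_telescope:
  assumes z: "gelfand_radius < norm z" and s: "s \<in> carrier G"
  shows "z * resolvent z s - (\<Sum>\<^sub>\<infinity>n. inverse z ^ Suc n * conv_pow G \<mu>\<^sub>c (Suc n) s) = delta G s"
proof -
  have z0: "z \<noteq> 0" using z gelfand_radius_nonneg by auto
  define g where "g = (\<lambda>n. inverse z ^ n * conv_pow G \<mu>\<^sub>c n s)"
  have gF: "g n = z * neumann_term z n s" for n unfolding g_def neumann_term_def using z0 by (simp add: field_simps)
  have gs: "g summable_on UNIV" unfolding gF by (intro summable_on_cmult_right summable_neumann_terms_at[OF z s])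
  have "z * resolvent z s = infsum g UNIV" unfolding resolvent_def gF by (simp add: infsum_cmult_right')
  also have "\<dots> = g 0 + (\<Sum>\<^sub>\<infinity>n. g (Suc n))" by (rule infsum_split_head[OF gs])
  finally show ?thesis by (simp add: g_def)
qed

lemma conv_resolvent_left:
  assumes z: "gelfand_radius < norm z" and s: "s \<in> carrier G"
  shows "conv G (\<lambda>s. z * delta G s - \<mu>\<^sub>c s) (resolvent z) s = delta G s"
proof -
  have e: "(\<lambda>s. z * delta G s - \<mu>\<^sub>c s) = (\<lambda>s. z * delta G s + (-1) * \<mu>\<^sub>c s)" by auto
  have "conv G (\<lambda>s. z * delta G s - \<mu>\<^sub>c s) (resolvent z) s
      = z * conv G (delta G) (resolvent z) s + (-1) * conv G \<mu>\<^sub>c (resolvent z) s"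
    unfolding e by (rule conv_lincomb_left[OF in_l1_delta in_l1_prob_complex in_l1_resolvent[OF z] s])
  also have "conv G (delta G) (resolvent z) s = resolvent z s" by (rule conv_delta_left[OF s])
  also have "conv G \<mu>\<^sub>c (resolvent z) s = (\<Sum>\<^sub>\<infinity>n. conv G \<mu>\<^sub>c (neumann_term z n) s)"
    unfolding resolvent_def[abs_def]
    by (rule conv_series_right[OF in_l1_neumann_term summable_l1_norm_neumann_term[OF z] in_l1_prob_complex s])
  also have "\<dots> = (\<Sum>\<^sub>\<infinity>n. inverse z ^ Suc n * conv_pow G \<mu>\<^sub>c (Suc n) s)"
    unfolding neumann_term_def[abs_def] conv_scale_right by simp
  finally show ?thesis using resolvent_telescope[OF z s] by simp
qed

lemma conv_resolvent_right:
  assumes z: "gelfand_radius < norm z" and s: "s \<in> carrier G"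
  shows "conv G (resolvent z) (\<lambda>s. z * delta G s - \<mu>\<^sub>c s) s = delta G s"
proof -
  have e: "(\<lambda>s. z * delta G s - \<mu>\<^sub>c s) = (\<lambda>s. z * delta G s + (-1) * \<mu>\<^sub>c s)" by auto
  have "conv G (resolvent z) (\<lambda>s. z * delta G s - \<mu>\<^sub>c s) s
      = z * conv G (resolvent z) (delta G) s + (-1) * conv G (resolvent z) \<mu>\<^sub>c s"
    unfolding e by (rule conv_lincomb_right[OF in_l1_resolvent[OF z] in_l1_delta in_l1_prob_complex s])
  also have "conv G (resolvent z) (delta G) s = resolvent z s" by (rule conv_delta_right[OF s])
  also have "conv G (resolvent z) \<mu>\<^sub>c s = (\<Sum>\<^sub>\<infinity>n. conv G (neumann_term z n) \<mu>\<^sub>c s)"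
    unfolding resolvent_def[abs_def]
    by (rule conv_series_left[OF in_l1_neumann_term summable_l1_norm_neumann_term[OF z] in_l1_prob_complex s])
  also have "\<dots> = (\<Sum>\<^sub>\<infinity>n. inverse z ^ Suc n * conv_pow G \<mu>\<^sub>c (Suc n) s)"
    unfolding neumann_term_def[abs_def] conv_scale_left conv_pow_Suc_right[OF in_l1_prob_complex s] ..
  finally show ?thesis using resolvent_telescope[OF z s] by simp
qed

lemma not_in_l1_spectrum: "gelfand_radius < norm z \<Longrightarrow> z \<notin> l1_spectrum G v \<mu>\<^sub>c"
  unfolding l1_spectrum_def l1_invertible_def l1_def
  using in_l1_resolvent[of z] conv_resolvent_left[of z] conv_resolvent_right[of z]
  unfolding in_l1_def by blast

lemma resolvent_of_real:
  assumes t: "gelfand_radius < t" and s: "s \<in> carrier G"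
  shows "(\<lambda>n. inverse t ^ Suc n * conv_pow G \<mu> n s) summable_on UNIV"
    and "resolvent (complex_of_real t) s = complex_of_real (\<Sum>\<^sub>\<infinity>n. inverse t ^ Suc n * conv_pow G \<mu> n s)"
proof -
  have tz: "gelfand_radius < norm (complex_of_real t)" using t gelfand_radius_nonneg by simp
  have e: "neumann_term (complex_of_real t) n s = complex_of_real (inverse t ^ Suc n * conv_pow G \<mu> n s)" for n
    unfolding neumann_term_def conv_pow_of_real by simp
  show "(\<lambda>n. inverse t ^ Suc n * conv_pow G \<mu> n s) summable_on UNIV"
    using summable_on_Re[OF summable_neumann_terms_at[OF tz s]] by (simp only: e Re_complex_of_real)
  show "resolvent (complex_of_real t) s = complex_of_real (\<Sum>\<^sub>\<infinity>n. inverse t ^ Suc n * conv_pow G \<mu> n s)"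
    unfolding resolvent_def e infsum_of_real ..
qed

text \<open>Positivity of \<open>\<mu>\<close> is used here: no cancellation occurs in the Neumann series at real \<open>t\<close>.\<close>

lemma partial_sum_le_l1_norm_resolvent:
  assumes t: "gelfand_radius < t"
  shows "(\<Sum>n<M. inverse t ^ Suc n * l1_norm (conv_pow G \<mu> n)) \<le> l1_norm (resolvent (complex_of_real t))"
proof -
  have t0: "0 < t" using t gelfand_radius_nonneg by simp
  have tz: "gelfand_radius < norm (complex_of_real t)" using t0 t by simp
  let ?T = "\<lambda>n s. inverse t ^ Suc n * (conv_pow G \<mu> n s * v s)"
  have norm_pow: "l1_norm (conv_pow G \<mu> n) = (\<Sum>\<^sub>\<infinity>s\<in>carrier G. conv_pow G \<mu> n s * v s)" for n
    unfolding l1_norm_def by (intro infsum_cong) (simp add: conv_pow_nonneg)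
  have T: "?T n summable_on carrier G" for n
  proof -
    have "(\<lambda>s. conv_pow G \<mu> n s * v s) summable_on carrier G"
      using in_l1_conv_pow[OF in_l1_prob, of n] unfolding in_l1_def
      by (rule summable_on_cong[THEN iffD1, rotated]) (simp add: conv_pow_nonneg)
    then show ?thesis by (rule summable_on_cmult_right)
  qed
  have "(\<Sum>n<M. inverse t ^ Suc n * l1_norm (conv_pow G \<mu> n)) = (\<Sum>\<^sub>\<infinity>s\<in>carrier G. \<Sum>n<M. ?T n s)"
    unfolding infsum_sum_lessThan(2)[OF T] norm_pow by (simp add: infsum_cmult_right')
  also have "\<dots> \<le> l1_norm (resolvent (complex_of_real t))" unfolding l1_norm_def
  proof (rule infsum_mono[OF infsum_sum_lessThan(1)[OF T]])
    show "(\<lambda>s. norm (resolvent (complex_of_real t) s) * v s) summable_on carrier G"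
      using in_l1_resolvent[OF tz] unfolding in_l1_def .
    fix s assume s: "s \<in> carrier G"
    have nn: "0 \<le> inverse t ^ Suc n * conv_pow G \<mu> n s" for n using t0 conv_pow_nonneg by simp
    have "(\<Sum>n<M. inverse t ^ Suc n * conv_pow G \<mu> n s) \<le> (\<Sum>\<^sub>\<infinity>n. inverse t ^ Suc n * conv_pow G \<mu> n s)"
      by (rule finite_sum_le_infsum[OF resolvent_of_real(1)[OF t s]]) (use nn in auto)
    also have "\<dots> = norm (resolvent (complex_of_real t) s)"
      unfolding resolvent_of_real(2)[OF t s] using nn by (simp add: infsum_nonneg)
    finally have "(\<Sum>n<M. inverse t ^ Suc n * conv_pow G \<mu> n s) * v s
        \<le> norm (resolvent (complex_of_real t) s) * v s"
      using weight_pos[OF s] by (intro mult_right_mono) auto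
    then show "(\<Sum>n<M. ?T n s) \<le> norm (resolvent (complex_of_real t) s) * v s"
      by (simp add: sum_distrib_right mult.assoc)
  qed
  finally show ?thesis .
qed

lemma l1_norm_resolvent_ge:
  assumes t: "gelfand_radius < t"
  shows "1 / (K * (t - gelfand_radius)) \<le> l1_norm (resolvent (complex_of_real t))"
proof -
  let ?r = gelfand_radius
  have t0: "0 < t" using t gelfand_radius_nonneg by simp
  have partial: "(\<Sum>n<M. inverse t ^ Suc n * (?r ^ n / K)) \<le> l1_norm (resolvent (complex_of_real t))" for M
  proof -
    have "?r ^ n / K \<le> l1_norm (conv_pow G \<mu> n)" for n
      using gelfand_radius_pow_le[of n] const_pos unfolding pow_norm_def
      by (simp add: pos_divide_le_eq mult.commute)
    then have "(\<Sum>n<M. inverse t ^ Suc n * (?r ^ n / K)) \<le> (\<Sum>n<M. inverse t ^ Suc n * l1_norm (conv_pow G \<mu> n))"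
      using t0 by (intro sum_mono mult_left_mono) auto
    then show ?thesis using partial_sum_le_l1_norm_resolvent[OF t, of M] by linarith
  qed
  have e: "inverse t ^ Suc n * (?r ^ n / K) = (inverse t / K) * (?r / t) ^ n" for n
    by (simp add: power_divide divide_inverse power_inverse power_mult_distrib mult_ac)
  have "norm (?r / t) < 1" using t t0 gelfand_radius_nonneg by simp
  then have sums: "(\<lambda>n. inverse t ^ Suc n * (?r ^ n / K)) sums ((inverse t / K) * (1 / (1 - ?r / t)))"
    unfolding e by (intro sums_mult geometric_sums)
  moreover have "(inverse t / K) * (1 / (1 - ?r / t)) = 1 / (K * (t - ?r))"
    using t0 t const_pos by (simp add: field_simps)
  ultimately show ?thesis
    using sums_le[OF _ sums] suminf_le_const[OF sums_summable[OF sums] partial] sums_unique[OF sums] by simp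
qed

lemma resolvent_eq_inverse_plus_conv:
  assumes z: "gelfand_radius < norm z" and g: "in_l1 g"
    and inverse: "\<And>s. s \<in> carrier G \<Longrightarrow> conv G (\<lambda>s. z\<^sub>0 * delta G s - \<mu>\<^sub>c s) g s = delta G s"
    and s: "s \<in> carrier G"
  shows "resolvent z s = g s + (z\<^sub>0 - z) * conv G (resolvent z) g s"
proof -
  let ?R = "resolvent z"
  let ?A = "\<lambda>s. z\<^sub>0 * delta G s - \<mu>\<^sub>c s" and ?T = "\<lambda>s. z * delta G s - \<mu>\<^sub>c s"
  have RL: "in_l1 ?R" by (rule in_l1_resolvent[OF z])
  have "in_l1 (\<lambda>s. z\<^sub>0 * delta G s + (-1) * \<mu>\<^sub>c s)"
    using in_l1_lincomb_and_norm_le[OF in_l1_delta in_l1_prob_complex] by blast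
  then have AL: "in_l1 ?A" by simp
  have "in_l1 (\<lambda>s. z * delta G s + (-1) * \<mu>\<^sub>c s)"
    using in_l1_lincomb_and_norm_le[OF in_l1_delta in_l1_prob_complex] by blast
  then have TL: "in_l1 ?T" by simp
  have RA: "conv G ?R ?A u = 1 * delta G u + (z\<^sub>0 - z) * ?R u" if u: "u \<in> carrier G" for u
  proof -
    have "conv G ?R ?A u = conv G ?R (\<lambda>s. 1 * ?T s + (z\<^sub>0 - z) * delta G s) u"
      by (rule conv_cong[OF u refl]) (simp add: algebra_simps)
    also have "\<dots> = 1 * conv G ?R ?T u + (z\<^sub>0 - z) * conv G ?R (delta G) u"
      by (rule conv_lincomb_right[OF RL TL in_l1_delta u])
    finally show ?thesis by (simp only: conv_resolvent_right[OF z u] conv_delta_right[OF u])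
  qed
  have "?R s = conv G ?R (conv G ?A g) s"
    using s by (simp add: conv_cong[OF s refl inverse] conv_delta_right)
  also have "\<dots> = conv G (conv G ?R ?A) g s"
    by (rule conv_assoc[OF RL AL g s, symmetric])
  also have "\<dots> = conv G (\<lambda>u. 1 * delta G u + (z\<^sub>0 - z) * ?R u) g s"
    by (rule conv_cong[OF s RA refl])
  also have "\<dots> = 1 * conv G (delta G) g s + (z\<^sub>0 - z) * conv G ?R g s"
    by (rule conv_lincomb_left[OF in_l1_delta RL g s])
  finally show ?thesis by (simp add: conv_delta_left[OF s])
qed

lemma gelfand_radius_in_l1_spectrum: "complex_of_real gelfand_radius \<in> l1_spectrum G v \<mu>\<^sub>c"
proof (rule ccontr)
  let ?r = gelfand_radius
  assume "complex_of_real ?r \<notin> l1_spectrum G v \<mu>\<^sub>c"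
  then obtain g where g: "in_l1 g"
    and inverse: "\<And>s. s \<in> carrier G \<Longrightarrow> conv G (\<lambda>s. complex_of_real ?r * delta G s - \<mu>\<^sub>c s) g s = delta G s"
    unfolding l1_spectrum_def l1_invertible_def l1_def in_l1_def by blast
  define a where "a = l1_norm g"
  have a0: "0 \<le> a" unfolding a_def by (rule l1_norm_nonneg)
  define t where "t = ?r + 1 / (4 * K * (a + 1))"
  have t: "?r < t" unfolding t_def using const_pos a0 by simp
  then have tz: "?r < norm (complex_of_real t)" using gelfand_radius_nonneg by simp
  define R where "R = resolvent (complex_of_real t)"
  have RL: "in_l1 R" unfolding R_def by (rule in_l1_resolvent[OF tz])
  have cL: "in_l1 (conv G R g) \<and> l1_norm (conv G R g) \<le> K * l1_norm R * l1_norm g"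
    by (rule in_l1_conv_and_norm_le[OF RL g])
  have "l1_norm R = l1_norm (\<lambda>s. 1 * g s + (complex_of_real ?r - complex_of_real t) * conv G R g s)"
    unfolding R_def by (rule l1_norm_cong) (simp add: resolvent_eq_inverse_plus_conv[OF tz g inverse])
  also have "\<dots> \<le> norm (1::complex) * l1_norm g + norm (complex_of_real ?r - complex_of_real t) * l1_norm (conv G R g)"
    using in_l1_lincomb_and_norm_le[OF g conjunct1[OF cL]] by blast
  also have "\<dots> \<le> a + (t - ?r) * (K * l1_norm R * a)"
    unfolding a_def using cL t by (simp add: mult_left_mono flip: of_real_diff)
  finally have up: "l1_norm R \<le> a + (t - ?r) * K * a * l1_norm R" by (simp add: mult_ac)
  have "(t - ?r) * K * a = (K * a) / (4 * K * (a + 1))" unfolding t_def by simp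
  also have "\<dots> \<le> 1 / 4"
    using const_pos a0 mult_pos_pos[of "4 * K" "a + 1"] by (simp add: pos_divide_le_eq algebra_simps)
  finally have "(t - ?r) * K * a \<le> 1 / 4" .
  then have "(t - ?r) * K * a * l1_norm R \<le> l1_norm R / 4"
    using l1_norm_nonneg[of R] mult_right_mono by fastforce
  then have "3 * l1_norm R \<le> 4 * a" using up by linarith
  moreover have "4 * (a + 1) \<le> l1_norm R"
    using l1_norm_resolvent_ge[OF t] unfolding R_def t_def using const_pos a0 by simp
  ultimately show False using a0 by simp
qed

theorem l1_spectral_radius_eq_gelfand_radius: "l1_spectral_radius G v \<mu>\<^sub>c = gelfand_radius"
  unfolding l1_spectral_radius_def
proof (rule cSup_eq_maximum)
  show "gelfand_radius \<in> norm ` l1_spectrum G v \<mu>\<^sub>c"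
    using gelfand_radius_in_l1_spectrum gelfand_radius_nonneg
    by (intro image_eqI[where x = "complex_of_real gelfand_radius"]) auto
  fix y assume "y \<in> norm ` l1_spectrum G v \<mu>\<^sub>c"
  then show "y \<le> gelfand_radius" using not_in_l1_spectrum by force
qed

end

section \<open>Fekete's subadditive lemma\<close>

lemma subadditive_le_multiple:
  fixes c :: "nat \<Rightarrow> real"
  assumes sub: "\<And>n m. c (n + m) \<le> c n + c m" and m: "1 \<le> m" and n: "1 \<le> n"
  shows "c n \<le> real ((n - 1) div m) * c m + Max (c ` {1..m})"
  using n
proof (induction n rule: less_induct)
  case (less n)
  show ?case
  proof (cases "n \<le> m")
    case True
    then have "(n - 1) div m = 0" using less.prems by simp
    moreover have "c n \<le> Max (c ` {1..m})" using True less.prems by (intro Max_ge) auto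
    ultimately show ?thesis by simp
  next
    case False
    have q: "(n - 1) div m = (n - m - 1) div m + 1"
      using div_add_self2[of m "n - m - 1"] False m by (simp add: Suc_diff_Suc)
    have "c n \<le> c m + c (n - m)" using sub[of m "n - m"] False by simp
    also have "\<dots> \<le> c m + (real ((n - m - 1) div m) * c m + Max (c ` {1..m}))"
      using less.IH[of "n - m"] False m by simp
    also have "\<dots> = real ((n - 1) div m) * c m + Max (c ` {1..m})"
      unfolding q by (simp add: algebra_simps)
    finally show ?thesis .
  qed
qed

lemma subadditive_average_le:
  fixes c :: "nat \<Rightarrow> real"
  assumes sub: "\<And>n m. c (n + m) \<le> c n + c m" and m: "1 \<le> m" and n: "1 \<le> n"
  shows "c n / n \<le> c m / m + (\<bar>c m\<bar> + \<bar>Max (c ` {1..m})\<bar>) / n"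
proof -
  define q where "q = (n - 1) div m"
  have "q * m \<le> n" "n \<le> q * m + m"
    using div_mult_mod_eq[of "n - 1" m] mod_less_divisor[of m "n - 1"] m n unfolding q_def by linarith+
  then have "real q * m \<le> n" "n \<le> real q * m + m" by (simp_all flip: of_nat_mult of_nat_add)
  then have "\<bar>real q - real n / m\<bar> \<le> 1" using m by (simp add: abs_le_iff field_simps)
  then have "\<bar>real q - real n / m\<bar> * \<bar>c m\<bar> \<le> 1 * \<bar>c m\<bar>" by (intro mult_right_mono) auto
  moreover have "(real q - real n / m) * c m \<le> \<bar>real q - real n / m\<bar> * \<bar>c m\<bar>"
    by (metis abs_ge_self abs_mult)
  ultimately have "real q * c m \<le> real n / m * c m + \<bar>c m\<bar>" by (simp add: algebra_simps)
  then have "c n \<le> real n / m * c m + (\<bar>c m\<bar> + \<bar>Max (c ` {1..m})\<bar>)"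
    using subadditive_le_multiple[OF sub m n] unfolding q_def by linarith
  then show ?thesis using n by (simp add: field_simps)
qed

theorem fekete_subadditive:
  fixes c :: "nat \<Rightarrow> real"
  assumes sub: "\<And>n m. c (n + m) \<le> c n + c m" and bdd: "\<And>n. 1 \<le> n \<Longrightarrow> B \<le> c n / n"
  shows "(\<lambda>n. c n / n) \<longlonglongrightarrow> Inf ((\<lambda>n. c n / n) ` {n. 1 \<le> n})"
proof (rule order_tendstoI)
  let ?S = "(\<lambda>n. c n / n) ` {n. 1 \<le> n}"
  have "bdd_below ?S" by (rule bdd_belowI[where m = B]) (auto intro: bdd)
  then have low: "Inf ?S \<le> c n / n" if "1 \<le> n" for n
    using that by (intro cInf_lower) auto
  show "eventually (\<lambda>n. r < c n / n) sequentially" if "r < Inf ?S" for r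
    using eventually_ge_at_top[of 1] by eventually_elim (use low that in fastforce)
  show "eventually (\<lambda>n. c n / n < r) sequentially" if r: "Inf ?S < r" for r
  proof -
    obtain m where m: "1 \<le> m" "c m / m < r" using cInf_lessD[OF _ r] by auto
    define E where "E = \<bar>c m\<bar> + \<bar>Max (c ` {1..m})\<bar>"
    have "(\<lambda>n. c m / m + E / real n) \<longlonglongrightarrow> c m / m + 0"
      by (intro tendsto_add tendsto_const lim_const_over_n)
    then have "eventually (\<lambda>n. c m / m + E / real n < r) sequentially"
      using m(2) by (intro order_tendstoD(2)) auto
    then show ?thesis using eventually_ge_at_top[of 1]
      by eventually_elim (use subadditive_average_le[OF sub m(1)] in \<open>force simp: E_def\<close>)
  qed
qed

lemma exp_le_quadratic: "exp (x::real) \<le> 1 + x + x\<^sup>2 * exp \<bar>x\<bar>"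
proof -
  obtain t where t: "\<bar>t\<bar> \<le> \<bar>x\<bar>" "exp x = (\<Sum>m<2. x ^ m / fact m) + exp t / fact 2 * x ^ 2"
    using Maclaurin_exp_le[of x 2] by blast
  have "exp t \<le> exp \<bar>x\<bar>" using t(1) by simp
  then have "exp t / 2 \<le> exp \<bar>x\<bar>" using exp_gt_zero[of t] by linarith
  then have "exp t / 2 * x ^ 2 \<le> exp \<bar>x\<bar> * x ^ 2" by (intro mult_right_mono) auto
  then show ?thesis using t(2) by (simp add: numeral_2_eq_2 mult.commute)
qed

lemma ln_le_mult_powr:
  assumes "0 < (x::real)" "0 < (q::real)" shows "ln x \<le> q * x powr (1/q)"
proof -
  have "ln x = q * ln (x powr (1/q))" using assms by (simp add: field_simps)
  also have "\<dots> \<le> q * (x powr (1/q) - 1)"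
    using assms by (intro mult_left_mono ln_le_minus_one) auto
  also have "\<dots> \<le> q * x powr (1/q)" using assms by (simp add: field_simps)
  finally show ?thesis .
qed

section \<open>Lyapunov exponent and spectral radii\<close>

locale lyapunov_setting = group G for G :: "('a,'m) monoid_scheme" (structure) +
  fixes w \<mu> :: "'a \<Rightarrow> real" and a C p\<^sub>0 :: real
  assumes lower_pos: "0 < a" and weight_ge: "\<And>s. s \<in> carrier G \<Longrightarrow> a \<le> w s"
    and const_pos: "0 < C"
    and weight_submult: "\<And>s t. s \<in> carrier G \<Longrightarrow> t \<in> carrier G \<Longrightarrow> w (s \<otimes> t) \<le> C * w s * w t"
    and prob_nonneg: "\<And>s. s \<in> carrier G \<Longrightarrow> 0 \<le> \<mu> s" and prob_has_sum: "(\<mu> has_sum 1) (carrier G)"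
    and one_le_p\<^sub>0: "1 \<le> p\<^sub>0" and moment_p\<^sub>0: "(\<lambda>s. \<mu> s * w s powr (1/p\<^sub>0)) summable_on carrier G"
begin

abbreviation P :: "nat \<Rightarrow> 'a \<Rightarrow> real" where "P n \<equiv> conv_pow G \<mu> n"
abbreviation v\<^sub>0 :: "'a \<Rightarrow> real" where "v\<^sub>0 s \<equiv> w s powr (1/p\<^sub>0)"

lemma weight_pos: "s \<in> carrier G \<Longrightarrow> 0 < w s"
  using weight_ge lower_pos by force

lemma root_weight_le:
  assumes p: "p\<^sub>0 \<le> p" and s: "s \<in> carrier G" shows "w s powr (1/p) \<le> 1 + v\<^sub>0 s"
proof (cases "1 \<le> w s")
  case True
  have "1/p \<le> 1/p\<^sub>0" using p one_le_p\<^sub>0 by (intro divide_left_mono) auto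
  then have "w s powr (1/p) \<le> v\<^sub>0 s" using True by (rule powr_mono)
  then show ?thesis by simp
next
  case False
  have "w s powr (1/p) \<le> 1" using False weight_pos[OF s] p one_le_p\<^sub>0 by (intro powr_le1) auto
  then show ?thesis by (smt (verit) powr_ge_zero)
qed

lemma weighted_group_powr:
  assumes p: "0 < p" shows "weighted_group G (\<lambda>s. w s powr (1/p)) (a powr (1/p)) (C powr (1/p))"
proof (intro weighted_group.intro weighted_group_axioms.intro)
  show "group G" by (rule is_group)
  show "0 < a powr (1/p)" using lower_pos by simp
  fix s assume s: "s \<in> carrier G"
  show "a powr (1/p) \<le> w s powr (1/p)" using weight_ge[OF s] lower_pos p by (intro powr_mono2) auto
  fix t assume t: "t \<in> carrier G"
  have "w (s \<otimes> t) powr (1/p) \<le> (C * w s * w t) powr (1/p)"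
    using weight_submult[OF s t] weight_pos[of "s \<otimes> t"] s t p by (intro powr_mono2) auto
  also have "\<dots> = C powr (1/p) * w s powr (1/p) * w t powr (1/p)"
    using const_pos weight_pos[OF s] weight_pos[OF t] by (simp add: powr_mult)
  finally show "w (s \<otimes> t) powr (1/p) \<le> C powr (1/p) * w s powr (1/p) * w t powr (1/p)" .
qed

lemma weighted_group_prob_powr:
  assumes p: "p\<^sub>0 \<le> p"
  shows "weighted_group_prob G (\<lambda>s. w s powr (1/p)) (a powr (1/p)) (C powr (1/p)) \<mu>"
proof -
  interpret weighted_group G "\<lambda>s. w s powr (1/p)" "a powr (1/p)" "C powr (1/p)"
    using p one_le_p\<^sub>0 by (intro weighted_group_powr) simp
  have "(\<lambda>s. norm (\<mu> s) * w s powr (1/p)) summable_on carrier G"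
  proof (rule summable_on_comparison_test)
    show "(\<lambda>s. \<mu> s + \<mu> s * v\<^sub>0 s) summable_on carrier G"
      by (intro summable_on_add has_sum_imp_summable[OF prob_has_sum] moment_p\<^sub>0)
    fix s assume s: "s \<in> carrier G"
    have "\<mu> s * w s powr (1/p) \<le> \<mu> s * (1 + v\<^sub>0 s)"
      using root_weight_le[OF p s] prob_nonneg[OF s] by (rule mult_left_mono)
    then show "norm (\<mu> s) * w s powr (1/p) \<le> \<mu> s + \<mu> s * v\<^sub>0 s"
      using prob_nonneg[OF s] by (simp add: algebra_simps)
  qed simp
  then show ?thesis
    by unfold_locales (auto simp: in_l1_def prob_nonneg prob_has_sum)
qed

sublocale W\<^sub>0: weighted_group_prob G v\<^sub>0 "a powr (1/p\<^sub>0)" "C powr (1/p\<^sub>0)" \<mu>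
  by (rule weighted_group_prob_powr) simp

lemma P_summable: "P n summable_on carrier G"
  using W\<^sub>0.has_sum_conv_pow has_sum_imp_summable by blast

lemma infsum_P: "infsum (P n) (carrier G) = 1"
  using W\<^sub>0.has_sum_conv_pow infsumI by blast

lemma P_v\<^sub>0_summable: "(\<lambda>s. P n s * v\<^sub>0 s) summable_on carrier G"
  using W\<^sub>0.in_l1_conv_pow[OF W\<^sub>0.in_l1_prob, of n] unfolding W\<^sub>0.in_l1_def
  by (rule summable_on_cong[THEN iffD1, rotated]) (simp add: W\<^sub>0.conv_pow_nonneg)

lemma ln_weight_ge: assumes "s \<in> carrier G" shows "ln a \<le> ln (w s)"
  using weight_ge[OF assms] lower_pos by simp

lemma abs_ln_weight_le: "s \<in> carrier G \<Longrightarrow> \<bar>ln (w s)\<bar> \<le> \<bar>ln a\<bar> + p\<^sub>0 * v\<^sub>0 s"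
  using ln_weight_ge ln_le_mult_powr[of "w s" p\<^sub>0] weight_pos one_le_p\<^sub>0
  by (smt (verit) powr_ge_zero mult_nonneg_nonneg)

lemma ln_weight_mult_le:
  assumes s: "s \<in> carrier G" and t: "t \<in> carrier G"
  shows "ln (w (s \<otimes> t)) \<le> ln C + ln (w s) + ln (w t)"
proof -
  have "ln (w (s \<otimes> t)) \<le> ln (C * w s * w t)"
    using weight_submult[OF s t] weight_pos[of "s \<otimes> t"] s t by simp
  also have "\<dots> = ln C + ln (w s) + ln (w t)"
    using const_pos weight_pos[OF s] weight_pos[OF t] by (simp add: ln_mult)
  finally show ?thesis .
qed

lemma summable_P_ln_weight: "(\<lambda>s. P n s * ln (w s)) summable_on carrier G"
proof (rule abs_summable_summable, rule summable_on_comparison_test)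
  show "(\<lambda>s. \<bar>ln a\<bar> * P n s + p\<^sub>0 * (P n s * v\<^sub>0 s)) summable_on carrier G"
    by (rule summable_lincomb[OF P_summable P_v\<^sub>0_summable])
  fix s assume s: "s \<in> carrier G"
  have "P n s * \<bar>ln (w s)\<bar> \<le> P n s * (\<bar>ln a\<bar> + p\<^sub>0 * v\<^sub>0 s)"
    using abs_ln_weight_le[OF s] W\<^sub>0.conv_pow_nonneg by (rule mult_left_mono)
  then show "norm (P n s * ln (w s)) \<le> \<bar>ln a\<bar> * P n s + p\<^sub>0 * (P n s * v\<^sub>0 s)"
    using W\<^sub>0.conv_pow_nonneg[of n s] by (simp add: abs_mult algebra_simps)
qed simp

definition log_moment :: "nat \<Rightarrow> real" where
  "log_moment n = (\<Sum>\<^sub>\<infinity>s\<in>carrier G. P n s * ln (w s))"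

lemma ln_lower_le_log_moment: "ln a \<le> log_moment n"
proof -
  have "(\<Sum>\<^sub>\<infinity>s\<in>carrier G. ln a * P n s) \<le> log_moment n" unfolding log_moment_def
    by (rule infsum_mono[OF summable_on_cmult_right[OF P_summable] summable_P_ln_weight])
       (use ln_weight_ge W\<^sub>0.conv_pow_nonneg in \<open>simp add: mult.commute[of "ln a"] mult_left_mono\<close>)
  then show ?thesis by (simp add: infsum_cmult_right' infsum_P)
qed

lemma abs_summable_P_P_ln_weight:
  "(\<lambda>(t,u). norm (P n t * P m u * ln (w (t \<otimes> u)))) summable_on carrier G \<times> carrier G"
proof -
  define c where "c = \<bar>ln a\<bar> + p\<^sub>0 * C powr (1/p\<^sub>0)"
  have c0: "0 \<le> c" unfolding c_def using one_le_p\<^sub>0 by simp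
  have "(\<lambda>p. norm ((\<lambda>(t,u). P n t * P m u * ln (w (t \<otimes> u))) p)) summable_on carrier G \<times> carrier G"
  proof (rule abs_summable_on_Times_product_bound)
    show "(\<lambda>t. c * (P n t + P n t * v\<^sub>0 t)) summable_on carrier G"
      by (intro summable_on_cmult_right summable_on_add P_summable P_v\<^sub>0_summable)
    show "(\<lambda>u. P m u + P m u * v\<^sub>0 u) summable_on carrier G"
      by (intro summable_on_add P_summable P_v\<^sub>0_summable)
    show "0 \<le> c * (P n t + P n t * v\<^sub>0 t)" for t using c0 W\<^sub>0.conv_pow_nonneg[of n t] by simp
    show "0 \<le> P m u + P m u * v\<^sub>0 u" for u using W\<^sub>0.conv_pow_nonneg[of m u] by simp
    fix t u assume t: "t \<in> carrier G" and u: "u \<in> carrier G"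
    have "\<bar>ln (w (t \<otimes> u))\<bar> \<le> \<bar>ln a\<bar> + p\<^sub>0 * v\<^sub>0 (t \<otimes> u)"
      using abs_ln_weight_le t u by simp
    also have "\<dots> \<le> \<bar>ln a\<bar> * 1 + p\<^sub>0 * C powr (1/p\<^sub>0) * (v\<^sub>0 t * v\<^sub>0 u)"
      using W\<^sub>0.weight_submult[OF t u] one_le_p\<^sub>0 by (simp add: mult_left_mono mult.assoc)
    also have "\<dots> \<le> c * ((1 + v\<^sub>0 t) * (1 + v\<^sub>0 u))"
    proof -
      have "1 \<le> (1 + v\<^sub>0 t) * (1 + v\<^sub>0 u)" "v\<^sub>0 t * v\<^sub>0 u \<le> (1 + v\<^sub>0 t) * (1 + v\<^sub>0 u)"
        by (simp_all add: algebra_simps)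
      then have "\<bar>ln a\<bar> * 1 + p\<^sub>0 * C powr (1/p\<^sub>0) * (v\<^sub>0 t * v\<^sub>0 u)
          \<le> \<bar>ln a\<bar> * ((1 + v\<^sub>0 t) * (1 + v\<^sub>0 u)) + p\<^sub>0 * C powr (1/p\<^sub>0) * ((1 + v\<^sub>0 t) * (1 + v\<^sub>0 u))"
        using one_le_p\<^sub>0 by (intro add_mono mult_left_mono) auto
      then show ?thesis unfolding c_def by (simp add: algebra_simps)
    qed
    finally have "P n t * P m u * \<bar>ln (w (t \<otimes> u))\<bar> \<le> P n t * P m u * (c * ((1 + v\<^sub>0 t) * (1 + v\<^sub>0 u)))"
      using W\<^sub>0.conv_pow_nonneg by (intro mult_left_mono) auto
    then show "norm ((\<lambda>(t,u). P n t * P m u * ln (w (t \<otimes> u))) (t,u))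
        \<le> c * (P n t + P n t * v\<^sub>0 t) * (P m u + P m u * v\<^sub>0 u)"
      using W\<^sub>0.conv_pow_nonneg[of n t] W\<^sub>0.conv_pow_nonneg[of m u] by (simp add: abs_mult algebra_simps)
  qed
  then show ?thesis by (simp add: case_prod_unfold)
qed

lemma summable_P_ln_weight_translate:
  assumes t: "t \<in> carrier G" shows "(\<lambda>u. P m u * ln (w (t \<otimes> u))) summable_on carrier G"
proof (rule abs_summable_summable, rule summable_on_comparison_test)
  show "(\<lambda>u. \<bar>ln a\<bar> * P m u + (p\<^sub>0 * C powr (1/p\<^sub>0) * v\<^sub>0 t) * (P m u * v\<^sub>0 u)) summable_on carrier G"
    by (rule summable_lincomb[OF P_summable P_v\<^sub>0_summable])
  fix u assume u: "u \<in> carrier G"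
  have "\<bar>ln (w (t \<otimes> u))\<bar> \<le> \<bar>ln a\<bar> + p\<^sub>0 * v\<^sub>0 (t \<otimes> u)"
    using abs_ln_weight_le t u by simp
  also have "\<dots> \<le> \<bar>ln a\<bar> + p\<^sub>0 * C powr (1/p\<^sub>0) * v\<^sub>0 t * v\<^sub>0 u"
    using W\<^sub>0.weight_submult[OF t u] one_le_p\<^sub>0 by (simp add: mult_left_mono mult.assoc)
  finally have "P m u * \<bar>ln (w (t \<otimes> u))\<bar> \<le> P m u * (\<bar>ln a\<bar> + p\<^sub>0 * C powr (1/p\<^sub>0) * v\<^sub>0 t * v\<^sub>0 u)"
    using W\<^sub>0.conv_pow_nonneg by (rule mult_left_mono)
  then show "norm (P m u * ln (w (t \<otimes> u))) \<le> \<bar>ln a\<bar> * P m u + (p\<^sub>0 * C powr (1/p\<^sub>0) * v\<^sub>0 t) * (P m u * v\<^sub>0 u)"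
    using W\<^sub>0.conv_pow_nonneg[of m u] by (simp add: abs_mult algebra_simps)
qed simp

lemma infsum_P_ln_weight_translate_le:
  assumes t: "t \<in> carrier G"
  shows "(\<Sum>\<^sub>\<infinity>u\<in>carrier G. P m u * ln (w (t \<otimes> u))) \<le> ln C + ln (w t) + log_moment m"
proof -
  have "(\<Sum>\<^sub>\<infinity>u\<in>carrier G. P m u * ln (w (t \<otimes> u)))
      \<le> (\<Sum>\<^sub>\<infinity>u\<in>carrier G. (ln C + ln (w t)) * P m u + 1 * (P m u * ln (w u)))"
  proof (rule infsum_mono[OF summable_P_ln_weight_translate[OF t]])
    show "(\<lambda>u. (ln C + ln (w t)) * P m u + 1 * (P m u * ln (w u))) summable_on carrier G"
      by (rule summable_lincomb[OF P_summable summable_P_ln_weight])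
    fix u assume u: "u \<in> carrier G"
    have "P m u * ln (w (t \<otimes> u)) \<le> P m u * (ln C + ln (w t) + ln (w u))"
      using ln_weight_mult_le[OF t u] W\<^sub>0.conv_pow_nonneg by (rule mult_left_mono)
    then show "P m u * ln (w (t \<otimes> u)) \<le> (ln C + ln (w t)) * P m u + 1 * (P m u * ln (w u))"
      by (simp add: algebra_simps)
  qed
  also have "\<dots> = (ln C + ln (w t)) * 1 + 1 * log_moment m"
    by (simp only: infsum_lincomb[OF P_summable summable_P_ln_weight] infsum_P log_moment_def)
  finally show ?thesis by simp
qed

lemma log_moment_add_le: "log_moment (n + m) \<le> ln C + log_moment n + log_moment m"
proof -
  note abs = abs_summable_P_P_ln_weight[of n m]
  have "(\<lambda>(t,u). P n t * P m u * ln (w (t \<otimes> u))) summable_on carrier G \<times> carrier G"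
    using abs_summable_summable[OF abs[unfolded case_prod_unfold]] by (simp add: case_prod_unfold)
  then have outer: "(\<lambda>t. P n t * (\<Sum>\<^sub>\<infinity>u\<in>carrier G. P m u * ln (w (t \<otimes> u)))) summable_on carrier G"
    using summable_on_Sigma_banach[of "\<lambda>t u. P n t * P m u * ln (w (t \<otimes> u))"]
    by (simp add: mult.assoc infsum_cmult_right')
  have "log_moment (n + m) = (\<Sum>\<^sub>\<infinity>s\<in>carrier G. conv G (P n) (P m) s * ln (w s))"
    unfolding log_moment_def by (intro infsum_cong) (simp add: W\<^sub>0.conv_pow_add[OF W\<^sub>0.in_l1_prob])
  also have "\<dots> = (\<Sum>\<^sub>\<infinity>t\<in>carrier G. \<Sum>\<^sub>\<infinity>u\<in>carrier G. P n t * P m u * ln (w (t \<otimes> u)))"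
    by (rule infsum_conv_mult(2)[OF abs])
  also have "\<dots> = (\<Sum>\<^sub>\<infinity>t\<in>carrier G. P n t * (\<Sum>\<^sub>\<infinity>u\<in>carrier G. P m u * ln (w (t \<otimes> u))))"
    by (simp add: mult.assoc infsum_cmult_right')
  also have "\<dots> \<le> (\<Sum>\<^sub>\<infinity>t\<in>carrier G. (ln C + log_moment m) * P n t + 1 * (P n t * ln (w t)))"
  proof (rule infsum_mono[OF outer summable_lincomb[OF P_summable summable_P_ln_weight]])
    fix t assume t: "t \<in> carrier G"
    have "P n t * (\<Sum>\<^sub>\<infinity>u\<in>carrier G. P m u * ln (w (t \<otimes> u))) \<le> P n t * (ln C + ln (w t) + log_moment m)"
      using infsum_P_ln_weight_translate_le[OF t] W\<^sub>0.conv_pow_nonneg by (rule mult_left_mono)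
    then show "P n t * (\<Sum>\<^sub>\<infinity>u\<in>carrier G. P m u * ln (w (t \<otimes> u)))
        \<le> (ln C + log_moment m) * P n t + 1 * (P n t * ln (w t))"
      by (simp add: algebra_simps)
  qed
  also have "\<dots> = ln C + log_moment n + log_moment m"
    by (simp only: infsum_lincomb[OF P_summable summable_P_ln_weight] infsum_P log_moment_def) simp
  finally show ?thesis .
qed

text \<open>By Fekete's lemma this infimum is also the limit of \<open>log_moment n / n\<close>.\<close>

definition lyapunov_exponent :: real where
  "lyapunov_exponent = Inf ((\<lambda>n. (log_moment n + ln C) / n) ` {n. 1 \<le> n})"

lemma lower_bound_average: "1 \<le> n \<Longrightarrow> - \<bar>ln a + ln C\<bar> \<le> (log_moment n + ln C) / n"
proof -
  assume n: "1 \<le> n"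
  have k: "ln a + ln C \<le> log_moment n + ln C" using ln_lower_le_log_moment[of n] by simp
  show ?thesis
  proof (cases "0 \<le> log_moment n + ln C")
    case True
    then have "0 \<le> (log_moment n + ln C) / n" by simp
    then show ?thesis using abs_ge_zero[of "ln a + ln C"] by linarith
  next
    case False
    then have "log_moment n + ln C \<le> (log_moment n + ln C) / n"
      using n by (simp add: le_divide_eq mult_le_cancel_left1)
    then show ?thesis using k by linarith
  qed
qed

lemma lyapunov_exponent_le: "1 \<le> n \<Longrightarrow> lyapunov_exponent \<le> (log_moment n + ln C) / n"
  unfolding lyapunov_exponent_def
  by (rule cInf_lower) (auto intro!: bdd_belowI[where m = "- \<bar>ln a + ln C\<bar>"] lower_bound_average)

lemma average_less_if_lyapunov_exponent_less:
  "lyapunov_exponent < r \<Longrightarrow> \<exists>n. 1 \<le> n \<and> (log_moment n + ln C) / n < r"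
  unfolding lyapunov_exponent_def by (drule cInf_lessD[rotated]) auto

lemma log_moment_average_tendsto: "(\<lambda>n. (1 / real n) * log_moment n) \<longlonglongrightarrow> lyapunov_exponent"
proof -
  have "(\<lambda>n. (log_moment n + ln C) / n) \<longlonglongrightarrow> lyapunov_exponent"
    unfolding lyapunov_exponent_def using log_moment_add_le
    by (intro fekete_subadditive[OF _ lower_bound_average]) (simp add: algebra_simps)
  then have "(\<lambda>n. (log_moment n + ln C) / n - ln C / real n) \<longlonglongrightarrow> lyapunov_exponent - 0"
    by (intro tendsto_diff lim_const_over_n)
  then show ?thesis by (simp add: field_simps add_divide_distrib)
qed

definition root_moment :: "real \<Rightarrow> nat \<Rightarrow> real" where
  "root_moment p n = (\<Sum>\<^sub>\<infinity>s\<in>carrier G. P n s * w s powr (1/p))"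

lemma summable_root_moment:
  assumes p: "p\<^sub>0 \<le> p" shows "(\<lambda>s. P n s * w s powr (1/p)) summable_on carrier G"
proof (rule summable_on_comparison_test)
  show "(\<lambda>s. P n s + P n s * v\<^sub>0 s) summable_on carrier G" by (intro summable_on_add P_summable P_v\<^sub>0_summable)
  fix s assume s: "s \<in> carrier G"
  have "P n s * w s powr (1/p) \<le> P n s * (1 + v\<^sub>0 s)"
    using root_weight_le[OF p s] W\<^sub>0.conv_pow_nonneg by (rule mult_left_mono)
  then show "P n s * w s powr (1/p) \<le> P n s + P n s * v\<^sub>0 s" by (simp add: algebra_simps)
  show "0 \<le> P n s * w s powr (1/p)" using W\<^sub>0.conv_pow_nonneg by simp
qed

lemma root_weight_eq_exp: assumes "s \<in> carrier G" shows "w s powr (1/p) = exp (ln (w s) / p)"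
  using weight_pos[OF assms] by (simp add: powr_def)

text \<open>Jensen's inequality for \<open>exp\<close>, via its tangent line at the mean \<open>log_moment n / p\<close>.\<close>

lemma exp_log_moment_le_root_moment:
  assumes p: "p\<^sub>0 \<le> p" shows "exp (log_moment n / p) \<le> root_moment p n"
proof -
  define m where "m = log_moment n / p"
  have p0: "0 < p" using p one_le_p\<^sub>0 by simp
  have tangent: "exp m * (1 + (x - m)) \<le> exp x" for x
    using exp_ge_add_one_self[of "x - m"] by (simp add: exp_diff field_simps)
  have e: "P n s * (exp m * (1 + (ln (w s) / p - m)))
      = (exp m * (1 - m)) * P n s + (exp m / p) * (P n s * ln (w s))" for s
    using p0 by (simp add: field_simps)
  have "(\<Sum>\<^sub>\<infinity>s\<in>carrier G. P n s * (exp m * (1 + (ln (w s) / p - m)))) \<le> root_moment p n"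
    unfolding root_moment_def
  proof (rule infsum_mono)
    show "(\<lambda>s. P n s * (exp m * (1 + (ln (w s) / p - m)))) summable_on carrier G"
      unfolding e by (rule summable_lincomb[OF P_summable summable_P_ln_weight])
    show "(\<lambda>s. P n s * w s powr (1/p)) summable_on carrier G" by (rule summable_root_moment[OF p])
    fix s assume s: "s \<in> carrier G"
    have "exp m * (1 + (ln (w s) / p - m)) \<le> w s powr (1/p)"
      using tangent root_weight_eq_exp[OF s] by simp
    then show "P n s * (exp m * (1 + (ln (w s) / p - m))) \<le> P n s * w s powr (1/p)"
      using W\<^sub>0.conv_pow_nonneg by (rule mult_left_mono)
  qed
  also have "(\<Sum>\<^sub>\<infinity>s\<in>carrier G. P n s * (exp m * (1 + (ln (w s) / p - m)))) = exp m"
    unfolding e infsum_lincomb[OF P_summable summable_P_ln_weight] infsum_P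
    unfolding m_def log_moment_def[symmetric] using p0 by (simp add: field_simps)
  finally show ?thesis unfolding m_def .
qed

lemma root_moment_pos: "p\<^sub>0 \<le> p \<Longrightarrow> 0 < root_moment p n"
  using exp_log_moment_le_root_moment[of p n] by (smt (verit) exp_gt_zero)

lemma log_moment_le_ln_root_moment:
  assumes p: "p\<^sub>0 \<le> p" shows "log_moment n \<le> p * ln (root_moment p n)"
proof -
  have "log_moment n / p \<le> ln (root_moment p n)"
    using exp_log_moment_le_root_moment[OF p] root_moment_pos[OF p] by (simp add: ln_ge_iff)
  then show ?thesis using p one_le_p\<^sub>0 by (simp add: field_simps)
qed

text \<open>A majorant for the second-order Taylor remainder of \<open>exp (ln (w s) / p)\<close>, uniform in \<open>p \<ge> 2 p\<^sub>0\<close>.\<close>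

definition remainder_weight :: "'a \<Rightarrow> real" where
  "remainder_weight s = exp \<bar>ln a\<bar> * (ln a)\<^sup>2 + 16 * p\<^sub>0\<^sup>2 * v\<^sub>0 s"

definition remainder_moment :: "nat \<Rightarrow> real" where
  "remainder_moment n = (\<Sum>\<^sub>\<infinity>s\<in>carrier G. P n s * remainder_weight s)"

lemma summable_remainder_moment: "(\<lambda>s. P n s * remainder_weight s) summable_on carrier G"
  using summable_lincomb[OF P_summable P_v\<^sub>0_summable, of "exp \<bar>ln a\<bar> * (ln a)\<^sup>2" n "16 * p\<^sub>0\<^sup>2"]
  by (simp add: remainder_weight_def algebra_simps)

lemma remainder_moment_nonneg: "0 \<le> remainder_moment n"
  unfolding remainder_moment_def remainder_weight_def
  by (intro infsum_nonneg mult_nonneg_nonneg W\<^sub>0.conv_pow_nonneg add_nonneg_nonneg) auto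

lemma sq_ln_weight_exp_le:
  assumes p: "2 * p\<^sub>0 \<le> p" and s: "s \<in> carrier G"
  shows "(ln (w s))\<^sup>2 * exp (\<bar>ln (w s)\<bar> / p) \<le> remainder_weight s"
proof (cases "1 \<le> w s")
  case True
  define h where "h = w s powr (1 / (2 * p\<^sub>0))"
  have y0: "0 \<le> ln (w s)" using True by simp
  have "ln (w s) \<le> (4 * p\<^sub>0) * w s powr (1 / (4 * p\<^sub>0))"
    using ln_le_mult_powr[OF weight_pos[OF s], of "4 * p\<^sub>0"] one_le_p\<^sub>0 by simp
  then have "(ln (w s))\<^sup>2 \<le> ((4 * p\<^sub>0) * w s powr (1 / (4 * p\<^sub>0)))\<^sup>2" using y0 by (intro power_mono) auto
  also have "\<dots> = 16 * p\<^sub>0\<^sup>2 * (w s powr (1 / (4 * p\<^sub>0)) * w s powr (1 / (4 * p\<^sub>0)))"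
    by (simp add: power2_eq_square)
  also have "w s powr (1 / (4 * p\<^sub>0)) * w s powr (1 / (4 * p\<^sub>0)) = h"
    unfolding h_def powr_add[symmetric] by simp
  finally have sq: "(ln (w s))\<^sup>2 \<le> 16 * p\<^sub>0\<^sup>2 * h" .
  have "exp (\<bar>ln (w s)\<bar> / p) = w s powr (1/p)" using root_weight_eq_exp[OF s] y0 by simp
  also have "\<dots> \<le> h" unfolding h_def using True p one_le_p\<^sub>0 by (intro powr_mono) (auto simp: frac_le)
  finally have ex: "exp (\<bar>ln (w s)\<bar> / p) \<le> h" .
  have "h * h = v\<^sub>0 s" unfolding h_def powr_add[symmetric] by simp
  then have "(ln (w s))\<^sup>2 * exp (\<bar>ln (w s)\<bar> / p) \<le> 16 * p\<^sub>0\<^sup>2 * v\<^sub>0 s"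
    using mult_mono[OF sq ex] unfolding h_def by (simp add: mult.assoc)
  moreover have "0 \<le> exp \<bar>ln a\<bar> * (ln a)\<^sup>2" by simp
  ultimately show ?thesis unfolding remainder_weight_def by linarith
next
  case False
  have "\<bar>ln (w s)\<bar> \<le> \<bar>ln a\<bar>" using False ln_weight_ge[OF s] weight_pos[OF s] by simp
  moreover have "\<bar>ln (w s)\<bar> / p \<le> \<bar>ln (w s)\<bar>" using p one_le_p\<^sub>0 by (simp add: divide_le_eq mult_le_cancel_left1)
  ultimately have "(ln (w s))\<^sup>2 \<le> (ln a)\<^sup>2" "exp (\<bar>ln (w s)\<bar> / p) \<le> exp \<bar>ln a\<bar>"
    by (simp add: abs_le_square_iff, simp)
  then have "(ln (w s))\<^sup>2 * exp (\<bar>ln (w s)\<bar> / p) \<le> exp \<bar>ln a\<bar> * (ln a)\<^sup>2"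
    using mult_mono[of "(ln (w s))\<^sup>2" "(ln a)\<^sup>2" "exp (\<bar>ln (w s)\<bar> / p)" "exp \<bar>ln a\<bar>"]
    by (simp add: mult.commute)
  moreover have "0 \<le> 16 * p\<^sub>0\<^sup>2 * v\<^sub>0 s" by simp
  ultimately show ?thesis unfolding remainder_weight_def by linarith
qed

lemma root_weight_le_taylor:
  assumes p: "2 * p\<^sub>0 \<le> p" and s: "s \<in> carrier G"
  shows "w s powr (1/p) \<le> 1 + ln (w s) / p + remainder_weight s / p\<^sup>2"
proof -
  have "w s powr (1/p) \<le> 1 + ln (w s) / p + (ln (w s) / p)\<^sup>2 * exp \<bar>ln (w s) / p\<bar>"
    unfolding root_weight_eq_exp[OF s] by (rule exp_le_quadratic)
  also have "(ln (w s) / p)\<^sup>2 * exp \<bar>ln (w s) / p\<bar> = (ln (w s))\<^sup>2 * exp (\<bar>ln (w s)\<bar> / p) / p\<^sup>2"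
    using p one_le_p\<^sub>0 by (simp add: power_divide)
  also have "\<dots> \<le> remainder_weight s / p\<^sup>2" using sq_ln_weight_exp_le[OF p s] by (simp add: divide_right_mono)
  finally show ?thesis by simp
qed

lemma ln_root_moment_le:
  assumes p: "2 * p\<^sub>0 \<le> p" shows "p * ln (root_moment p n) \<le> log_moment n + remainder_moment n / p"
proof -
  have pp: "p\<^sub>0 \<le> p" and p0: "0 < p" using p one_le_p\<^sub>0 by simp_all
  have e: "P n s * (1 + ln (w s) / p + remainder_weight s / p\<^sup>2)
      = 1 * P n s + (1/p) * (P n s * ln (w s)) + (1/p\<^sup>2) * (P n s * remainder_weight s)" for s
    by (simp add: algebra_simps)
  have "root_moment p n \<le> (\<Sum>\<^sub>\<infinity>s\<in>carrier G. P n s * (1 + ln (w s) / p + remainder_weight s / p\<^sup>2))"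
    unfolding root_moment_def
  proof (rule infsum_mono[OF summable_root_moment[OF pp]])
    show "(\<lambda>s. P n s * (1 + ln (w s) / p + remainder_weight s / p\<^sup>2)) summable_on carrier G"
      unfolding e by (intro summable_on_add summable_on_cmult_right P_summable summable_P_ln_weight
          summable_remainder_moment)
    show "P n s * w s powr (1/p) \<le> P n s * (1 + ln (w s) / p + remainder_weight s / p\<^sup>2)"
      if "s \<in> carrier G" for s
      using root_weight_le_taylor[OF p that] W\<^sub>0.conv_pow_nonneg by (rule mult_left_mono)
  qed
  also have "\<dots> = 1 + log_moment n / p + remainder_moment n / p\<^sup>2"
  proof -
    have "(\<Sum>\<^sub>\<infinity>s\<in>carrier G. P n s * (1 + ln (w s) / p + remainder_weight s / p\<^sup>2))
        = (\<Sum>\<^sub>\<infinity>s\<in>carrier G. 1 * P n s + (1/p) * (P n s * ln (w s)))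
          + (\<Sum>\<^sub>\<infinity>s\<in>carrier G. (1/p\<^sup>2) * (P n s * remainder_weight s))"
      unfolding e by (intro infsum_add summable_lincomb summable_on_cmult_right P_summable
          summable_P_ln_weight summable_remainder_moment)
    also have "\<dots> = (1 * 1 + (1/p) * log_moment n) + (1/p\<^sup>2) * remainder_moment n"
      by (simp only: infsum_lincomb[OF P_summable summable_P_ln_weight] infsum_cmult_right' infsum_P
          log_moment_def remainder_moment_def)
    finally show ?thesis by simp
  qed
  finally have "root_moment p n - 1 \<le> log_moment n / p + remainder_moment n / p\<^sup>2" by simp
  then have "ln (root_moment p n) \<le> log_moment n / p + remainder_moment n / p\<^sup>2"
    using ln_le_minus_one[OF root_moment_pos[OF pp, of n]] by linarith
  then have "p * ln (root_moment p n) \<le> p * (log_moment n / p + remainder_moment n / p\<^sup>2)"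
    using p0 by (intro mult_left_mono) auto
  also have "\<dots> = log_moment n + remainder_moment n / p" using p0 by (simp add: field_simps power2_eq_square)
  finally show ?thesis .
qed

abbreviation spectral_radius :: "real \<Rightarrow> real" where
  "spectral_radius p \<equiv> l1_spectral_radius G (\<lambda>s. w s powr (1/p)) (\<lambda>s. complex_of_real (\<mu> s))"

lemma spectral_radius_eq_Inf:
  assumes p: "p\<^sub>0 \<le> p"
  shows "spectral_radius p = Inf ((\<lambda>n. root n (C powr (1/p) * root_moment p n)) ` {n. 1 \<le> n})"
proof -
  interpret W: weighted_group_prob G "\<lambda>s. w s powr (1/p)" "a powr (1/p)" "C powr (1/p)" \<mu>
    by (rule weighted_group_prob_powr[OF p])
  have "W.pow_norm n = C powr (1/p) * root_moment p n" for n
    unfolding W.pow_norm_def W.l1_norm_def root_moment_def by (simp add: W.conv_pow_nonneg)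
  then show ?thesis
    using W.l1_spectral_radius_eq_gelfand_radius unfolding W.gelfand_radius_def by simp
qed

lemma p_ln_root_eq:
  assumes p: "p\<^sub>0 \<le> p" and n: "1 \<le> n"
  shows "p * ln (root n (C powr (1/p) * root_moment p n)) = (ln C + p * ln (root_moment p n)) / n"
proof -
  have p0: "0 < p" using p one_le_p\<^sub>0 by simp
  have "ln (root n (C powr (1/p) * root_moment p n)) = (ln C / p + ln (root_moment p n)) / n"
    using n const_pos root_moment_pos[OF p, of n] by (simp add: ln_root ln_mult)
  then show ?thesis using p0 n by (simp add: field_simps)
qed

lemma exp_lyapunov_exponent_le_spectral_radius:
  assumes p: "p\<^sub>0 \<le> p" shows "exp (lyapunov_exponent / p) \<le> spectral_radius p"
  unfolding spectral_radius_eq_Inf[OF p]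
proof (rule cInf_greatest)
  have p0: "0 < p" using p one_le_p\<^sub>0 by simp
  fix x assume "x \<in> (\<lambda>n. root n (C powr (1/p) * root_moment p n)) ` {n. 1 \<le> n}"
  then obtain n where n: "1 \<le> n" and x: "x = root n (C powr (1/p) * root_moment p n)" by auto
  have "lyapunov_exponent \<le> (log_moment n + ln C) / n" by (rule lyapunov_exponent_le[OF n])
  also have "\<dots> \<le> (ln C + p * ln (root_moment p n)) / n"
    using log_moment_le_ln_root_moment[OF p, of n] n by (simp add: divide_right_mono)
  also have "\<dots> = p * ln x" unfolding x by (rule p_ln_root_eq[OF p n, symmetric])
  finally have "lyapunov_exponent / p \<le> ln x" using p0 by (simp add: field_simps)
  then show "exp (lyapunov_exponent / p) \<le> x"
    using n const_pos root_moment_pos[OF p, of n] unfolding x by (simp add: ln_ge_iff)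
qed auto

lemma spectral_radius_pos: "p\<^sub>0 \<le> p \<Longrightarrow> 0 < spectral_radius p"
  using exp_lyapunov_exponent_le_spectral_radius exp_gt_zero less_le_trans by blast

lemma lyapunov_exponent_le_ln_spectral_radius:
  assumes p: "p\<^sub>0 \<le> p" shows "lyapunov_exponent \<le> p * ln (spectral_radius p)"
proof -
  have "lyapunov_exponent / p \<le> ln (spectral_radius p)"
    using exp_lyapunov_exponent_le_spectral_radius[OF p] spectral_radius_pos[OF p] by (simp add: ln_ge_iff)
  then show ?thesis using p one_le_p\<^sub>0 by (simp add: field_simps)
qed

lemma ln_spectral_radius_le:
  assumes p: "p\<^sub>0 \<le> p" and n: "1 \<le> n"
  shows "p * ln (spectral_radius p) \<le> (ln C + p * ln (root_moment p n)) / n"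
proof -
  have p0: "0 < p" using p one_le_p\<^sub>0 by simp
  have pos: "0 < root k (C powr (1/p) * root_moment p k)" if "1 \<le> k" for k
    using that const_pos root_moment_pos[OF p] by simp
  have "spectral_radius p \<le> root n (C powr (1/p) * root_moment p n)"
    unfolding spectral_radius_eq_Inf[OF p]
    by (rule cInf_lower) (use n pos in \<open>auto intro!: bdd_belowI[where m = 0] less_imp_le\<close>)
  with spectral_radius_pos[OF p] have "p * ln (spectral_radius p) \<le> p * ln (root n (C powr (1/p) * root_moment p n))"
    using p0 by simp
  then show ?thesis using p_ln_root_eq[OF p n] by simp
qed

theorem ln_spectral_radius_tendsto:
  "((\<lambda>p. p * ln (spectral_radius p)) \<longlongrightarrow> lyapunov_exponent) at_top"
proof (rule tendstoI)
  fix e :: real assume e: "0 < e"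
  obtain n where n: "1 \<le> n" "(log_moment n + ln C) / n < lyapunov_exponent + e / 2"
    using average_less_if_lyapunov_exponent_less[of "lyapunov_exponent + e / 2"] e by auto
  have "dist (p * ln (spectral_radius p)) lyapunov_exponent < e"
    if p: "max (2 * p\<^sub>0) (2 * remainder_moment n / e + 1) \<le> p" for p
  proof -
    have p2: "2 * p\<^sub>0 \<le> p" and pp: "p\<^sub>0 \<le> p" and p0: "0 < p" using p one_le_p\<^sub>0 by auto
    have "p * ln (spectral_radius p) \<le> (ln C + p * ln (root_moment p n)) / n"
      by (rule ln_spectral_radius_le[OF pp n(1)])
    also have "\<dots> \<le> (ln C + (log_moment n + remainder_moment n / p)) / n"
      using ln_root_moment_le[OF p2, of n] by (simp add: divide_right_mono)
    also have "\<dots> = (log_moment n + ln C) / n + remainder_moment n / p / n"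
      by (simp add: add_divide_distrib)
    also have "remainder_moment n / p / n \<le> remainder_moment n / p"
      using frac_le[of "remainder_moment n / p" "remainder_moment n / p" 1 "real n"]
        n remainder_moment_nonneg[of n] p0 by simp
    also have "remainder_moment n / p < e / 2"
      using p e p0 by (simp add: field_simps)
    finally have "p * ln (spectral_radius p) < lyapunov_exponent + e" using n(2) by linarith
    then show ?thesis using lyapunov_exponent_le_ln_spectral_radius[OF pp] by (simp add: dist_real_def)
  qed
  then show "eventually (\<lambda>p. dist (p * ln (spectral_radius p)) lyapunov_exponent < e) at_top"
    unfolding eventually_at_top_linorder by blast
qed

end

theorem theorem3p4:
  fixes G :: "('a, 'm) monoid_scheme" and w :: "'a \<Rightarrow> real" and \<mu> :: "'a \<Rightarrow> real"
  assumes "group G" and "countable (carrier G)"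
    and "is_weight G w"
    and "\<forall>s\<in>carrier G. 0 \<le> \<mu> s" and "(\<mu> has_sum 1) (carrier G)"
    and "\<exists>p\<ge>1. (\<lambda>s. \<mu> s * w s powr (1 / p)) summable_on carrier G"
  shows "\<exists>L::real.
     (\<forall>n\<ge>1. (\<lambda>s. conv_pow G \<mu> n s * ln (w s)) summable_on carrier G) \<and>
     ((\<lambda>n. (1 / real n) * (\<Sum>\<^sub>\<infinity>s\<in>carrier G. conv_pow G \<mu> n s * ln (w s))) \<longlonglongrightarrow> L) \<and>
     ((\<lambda>p::real. p * ln (l1_spectral_radius G (\<lambda>s. w s powr (1 / p)) (\<lambda>s. complex_of_real (\<mu> s))))
        \<longlongrightarrow> L) at_top"
proof -
  obtain a C where "0 < a" "\<forall>s\<in>carrier G. a \<le> w s"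
    and "0 < C" "\<forall>s\<in>carrier G. \<forall>t\<in>carrier G. w (s \<otimes>\<^bsub>G\<^esub> t) \<le> C * w s * w t"
    using assms(3) unfolding is_weight_def by blast
  moreover obtain p\<^sub>0 where "1 \<le> p\<^sub>0" "(\<lambda>s. \<mu> s * w s powr (1 / p\<^sub>0)) summable_on carrier G"
    using assms(6) by blast
  ultimately interpret lyapunov_setting G w \<mu> a C p\<^sub>0
    using assms(1,4,5) by (intro lyapunov_setting.intro lyapunov_setting_axioms.intro) auto
  show ?thesis
    using summable_P_ln_weight log_moment_average_tendsto ln_spectral_radius_tendsto
    unfolding log_moment_def by blast
qed

end
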